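(* Let $G$ be a finite connected multigraph without loops on vertices $v_1,\ldots,v_n$, with $x_{i,j}$ edges between $v_i$ and $v_j$, whose skeleton $\overline{G}$ is a tree, and let $(\mathbf{r},\mathbf{d})$ be an arithmetical structure on $G$ with $\mathbf{r}=(r_1,\ldots,r_n)$. Then \[ |\mathcal{K}(G;\mathbf{r})| = \prod_{\{i,j\}:\,x_{i,j}\neq 0} x_{i,j}\ \prod_{i=1}^n r_i^{\deg_{\overline{G}}(v_i)-2}, \] where the first product is over unordered pairs $\{i,j\}$ of vertices joined by at least one edge and $\deg_{\overline{G}}(v_i)$ is the degree of $v_i$ in the skeleton.
   Context: The skeleton $\overline{G}$ of a multigraph $G$ is the simple graph on the same vertex set with one edge between $v_i$ and $v_j$ whenever $x_{i,j}\ge1$. The adjacency matrix $A$ of $G$ has entries $x_{i,j}$. An arithmetical structure on $G$ is a pair $(\mathbf{r},\mathbf{d})$ with $\mathbf{d}\in\mathbb{Z}_{\ge0}^n$ and $\mathbf{r}\in\mathbb{Z}_{>0}^n$ having entries with greatest common divisor $1$, such that $(\mathrm{diag}(\mathbf{d})-A)\mathbf{r}=\mathbf{0}$. $\mathcal{K}(G;\mathbf{r})$ is the torsion subgroup of $\mathbb{Z}^n/(\mathrm{diag}(\mathbf{d})-A)\mathbb{Z}^n$. *)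

theory Defs
  imports Complex_Main
begin

text \<open>Multigraphs on vertices 0..n-1 (standing for v_1..v_n), given by the edge-multiplicity
  function x :: nat => nat => nat (x i j = number of edges between vertices i and j).\<close>

definition loopless_multigraph :: "nat \<Rightarrow> (nat \<Rightarrow> nat \<Rightarrow> nat) \<Rightarrow> bool" where
  "loopless_multigraph n x \<longleftrightarrow> (\<forall>i<n. \<forall>j<n. x i j = x j i) \<and> (\<forall>i<n. x i i = 0)"

definition skel_adj :: "nat \<Rightarrow> (nat \<Rightarrow> nat \<Rightarrow> nat) \<Rightarrow> nat \<Rightarrow> nat \<Rightarrow> bool" where
  "skel_adj n x i j \<longleftrightarrow> i < n \<and> j < n \<and> i \<noteq> j \<and> x i j \<ge> 1"

definition skel_connected :: "nat \<Rightarrow> (nat \<Rightarrow> nat \<Rightarrow> nat) \<Rightarrow> bool" where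
  "skel_connected n x \<longleftrightarrow> (\<forall>i<n. \<forall>j<n. (skel_adj n x)\<^sup>*\<^sup>* i j)"

definition skel_has_cycle :: "nat \<Rightarrow> (nat \<Rightarrow> nat \<Rightarrow> nat) \<Rightarrow> bool" where
  "skel_has_cycle n x \<longleftrightarrow> (\<exists>vs. distinct vs \<and> length vs \<ge> 3 \<and> set vs \<subseteq> {..<n} \<and>
      (\<forall>k < length vs. skel_adj n x (vs ! k) (vs ! ((k + 1) mod length vs))))"

definition skel_is_tree :: "nat \<Rightarrow> (nat \<Rightarrow> nat \<Rightarrow> nat) \<Rightarrow> bool" where
  "skel_is_tree n x \<longleftrightarrow> n \<ge> 1 \<and> skel_connected n x \<and> \<not> skel_has_cycle n x"

definition skel_degree :: "nat \<Rightarrow> (nat \<Rightarrow> nat \<Rightarrow> nat) \<Rightarrow> nat \<Rightarrow> nat" where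
  "skel_degree n x i = card {j. skel_adj n x i j}"

definition lap :: "(nat \<Rightarrow> nat \<Rightarrow> nat) \<Rightarrow> (nat \<Rightarrow> int) \<Rightarrow> nat \<Rightarrow> nat \<Rightarrow> int" where
  "lap x d i j = (if i = j then d i else 0) - int (x i j)"

definition arith_structure :: "nat \<Rightarrow> (nat \<Rightarrow> nat \<Rightarrow> nat) \<Rightarrow> (nat \<Rightarrow> int) \<Rightarrow> (nat \<Rightarrow> int) \<Rightarrow> bool" where
  "arith_structure n x r d \<longleftrightarrow>
     (\<forall>i<n. d i \<ge> 0) \<and> (\<forall>i<n. r i > 0) \<and> Gcd (r ` {..<n}) = 1 \<and>
     (\<forall>i<n. (\<Sum>j<n. lap x d i j * r j) = 0)"

text \<open>Z^n as integer vectors supported on {..<n}; the image lattice (diag(d)-A) Z^n;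
  the torsion subgroup of Z^n/(diag(d)-A)Z^n as a set of cosets.\<close>
definition zvecs :: "nat \<Rightarrow> (nat \<Rightarrow> int) set" where
  "zvecs n = {v. \<forall>i. i \<ge> n \<longrightarrow> v i = 0}"

definition image_lattice :: "nat \<Rightarrow> (nat \<Rightarrow> nat \<Rightarrow> nat) \<Rightarrow> (nat \<Rightarrow> int) \<Rightarrow> (nat \<Rightarrow> int) set" where
  "image_lattice n x d =
     {(\<lambda>i. if i < n then (\<Sum>j<n. lap x d i j * y j) else 0) | y. y \<in> zvecs n}"

definition critical_group :: "nat \<Rightarrow> (nat \<Rightarrow> nat \<Rightarrow> nat) \<Rightarrow> (nat \<Rightarrow> int) \<Rightarrow> (nat \<Rightarrow> int) set set" where
  "critical_group n x d =
     {v \<in> zvecs n. \<exists>k::int. k > 0 \<and> (\<lambda>i. k * v i) \<in> image_lattice n x d}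
       // {(u, v). u \<in> zvecs n \<and> v \<in> zvecs n \<and> (\<lambda>i. u i - v i) \<in> image_lattice n x d}"

end

theory Submission
  imports Defs "HOL-Library.Function_Algebras"
begin

text \<open>Let \<open>E\<close> be the edge set of the skeleton, oriented from the smaller to the larger vertex, and
  \<open>\<partial> : \<int>\<^sup>E \<rightarrow> \<int>\<^sup>n\<close> its boundary map; since the skeleton is a tree, \<open>\<partial>\<close> is injective with image the
  vectors of coordinate sum zero. Let \<open>Q\<close> be the lattice of gradient flows
  \<open>(x\<^sub>i\<^sub>j (r\<^sub>j y\<^sub>i - r\<^sub>i y\<^sub>j))\<^sub>i\<^sub>j\<close>, \<open>y \<in> \<int>\<^sup>n\<close>, and \<open>P\<close> the lattice of flows \<open>t\<close> with \<open>r\<^sub>k\<close> dividing \<open>(\<partial>t)\<^sub>k\<close> for all \<open>k\<close>.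
  As \<open>(diag(d) - A) r = 0\<close>, the boundary of the gradient flow of \<open>y\<close> is \<open>r\<^sub>k ((diag(d) - A) y)\<^sub>k\<close>, so
  \<open>t \<mapsto> ((\<partial>t)\<^sub>k / r\<^sub>k)\<^sub>k\<close> induces an isomorphism from \<open>P/Q\<close> onto \<open>K\<^sub>0 / (diag(d) - A)\<int>\<^sup>n\<close>, where
  \<open>K\<^sub>0 = {v. \<Sum>\<^sub>i r\<^sub>i v\<^sub>i = 0}\<close>; being finite, this quotient is the torsion subgroup \<open>\<K>(G; r)\<close>.
  Removing leaves one at a time and using the tower law for indices gives
  \<open>[\<int>\<^sup>E : Q] = \<Prod> x\<^sub>i\<^sub>j \<Prod> r\<^sub>i\<^bsup>deg i - 1\<^esup> gcd r\<close> and \<open>[\<int>\<^sup>E : P] = \<Prod> r\<^sub>i / gcd r\<close>, whose quotient is \<open>|\<K>(G; r)| = [P : Q]\<close>.\<close>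

section \<open>Indices of subgroups of abelian groups\<close>

definition add_subgroup :: "'a::ab_group_add set \<Rightarrow> bool" where
  "add_subgroup A \<longleftrightarrow> 0 \<in> A \<and> (\<forall>a\<in>A. \<forall>b\<in>A. a - b \<in> A)"

definition coset_rel :: "'a::ab_group_add set \<Rightarrow> 'a set \<Rightarrow> ('a \<times> 'a) set" where
  "coset_rel B A = {(u, v). u \<in> B \<and> v \<in> B \<and> u - v \<in> A}"

definition subgroup_index :: "'a::ab_group_add set \<Rightarrow> 'a set \<Rightarrow> nat" where
  "subgroup_index B A = card (B // coset_rel B A)"

lemma add_subgroup_zero: "add_subgroup A \<Longrightarrow> 0 \<in> A"
  by (simp add: add_subgroup_def)

lemma add_subgroup_diff: "add_subgroup A \<Longrightarrow> a \<in> A \<Longrightarrow> b \<in> A \<Longrightarrow> a - b \<in> A"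
  by (simp add: add_subgroup_def)

lemma add_subgroup_uminus: "add_subgroup A \<Longrightarrow> a \<in> A \<Longrightarrow> - a \<in> A"
  by (metis add_subgroup_diff add_subgroup_zero diff_0)

lemma add_subgroup_add: "add_subgroup A \<Longrightarrow> a \<in> A \<Longrightarrow> b \<in> A \<Longrightarrow> a + b \<in> A"
  by (metis add_subgroup_diff add_subgroup_uminus diff_minus_eq_add)

lemma add_subgroup_Int:
  "add_subgroup A \<Longrightarrow> add_subgroup B \<Longrightarrow> add_subgroup (A \<inter> B)"
  by (simp add: add_subgroup_def)

lemma equiv_coset_rel: "add_subgroup A \<Longrightarrow> equiv B (coset_rel B A)"
  unfolding equiv_def refl_on_def sym_def trans_def coset_rel_def
  by (auto simp: add_subgroup_zero)
    (metis minus_diff_eq add_subgroup_uminus,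
     metis diff_add_cancel add_diff_eq add_subgroup_add add.commute diff_add_eq)

lemma bij_betw_quotients:
  assumes eq0: "equiv B0 R0" and eq1: "equiv B1 R1"
    and f: "\<And>a. a \<in> B0 \<Longrightarrow> f a \<in> B1"
    and surj: "\<And>b. b \<in> B1 \<Longrightarrow> \<exists>a\<in>B0. (f a, b) \<in> R1"
    and rel: "\<And>a a'. a \<in> B0 \<Longrightarrow> a' \<in> B0 \<Longrightarrow> (a, a') \<in> R0 \<longleftrightarrow> (f a, f a') \<in> R1"
  shows "bij_betw (\<lambda>X. R1 `` (f ` X)) (B0 // R0) (B1 // R1)"
proof -
  have class_image: "R1 `` (f ` (R0 `` {a})) = R1 `` {f a}" if "a \<in> B0" for a
  proof
    show "R1 `` f ` R0 `` {a} \<subseteq> R1 `` {f a}"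
    proof
      fix z assume "z \<in> R1 `` f ` R0 `` {a}"
      then obtain a' where a': "(a, a') \<in> R0" "(f a', z) \<in> R1" by auto
      hence "a' \<in> B0" using eq0 unfolding equiv_def refl_on_def by auto
      hence "(f a, f a') \<in> R1" using rel[OF that] a' by auto
      thus "z \<in> R1 `` {f a}" using a' eq1 unfolding equiv_def trans_def by blast
    qed
    have "(a, a) \<in> R0" using eq0 that unfolding equiv_def refl_on_def by auto
    thus "R1 `` {f a} \<subseteq> R1 `` f ` R0 `` {a}" by auto
  qed
  show ?thesis
  proof (rule bij_betw_imageI)
    show "inj_on (\<lambda>X. R1 `` f ` X) (B0 // R0)"
    proof (rule inj_onI)
      fix X Y assume "X \<in> B0 // R0" "Y \<in> B0 // R0" and e: "R1 `` f ` X = R1 `` f ` Y"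
      then obtain a b where ab: "a \<in> B0" "X = R0 `` {a}" "b \<in> B0" "Y = R0 `` {b}"
        by (auto elim!: quotientE)
      have "R1 `` {f a} = R1 `` {f b}" using e class_image ab by simp
      hence "(a, b) \<in> R0" using eq1 f ab rel eq_equiv_class_iff by metis
      thus "X = Y" using ab eq0 equiv_class_eq by metis
    qed
    show "(\<lambda>X. R1 `` f ` X) ` (B0 // R0) = B1 // R1"
    proof
      show "(\<lambda>X. R1 `` f ` X) ` (B0 // R0) \<subseteq> B1 // R1"
        using class_image f by (auto elim!: quotientE intro!: quotientI)
      show "B1 // R1 \<subseteq> (\<lambda>X. R1 `` f ` X) ` (B0 // R0)"
      proof
        fix Y assume "Y \<in> B1 // R1"
        then obtain b where b: "b \<in> B1" "Y = R1 `` {b}" by (auto elim: quotientE)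
        obtain a where a: "a \<in> B0" "(f a, b) \<in> R1" using surj b by blast
        have "Y = R1 `` f ` (R0 `` {a})"
          using equiv_class_eq[OF eq1 a(2)] class_image a b by simp
        thus "Y \<in> (\<lambda>X. R1 `` f ` X) ` (B0 // R0)" using a by (auto intro: quotientI)
      qed
    qed
  qed
qed

lemma card_quotient_eq:
  assumes "equiv B0 R0" "equiv B1 R1"
    "\<And>a. a \<in> B0 \<Longrightarrow> f a \<in> B1"
    "\<And>b. b \<in> B1 \<Longrightarrow> \<exists>a\<in>B0. (f a, b) \<in> R1"
    "\<And>a a'. a \<in> B0 \<Longrightarrow> a' \<in> B0 \<Longrightarrow> (a, a') \<in> R0 \<longleftrightarrow> (f a, f a') \<in> R1"
  shows "card (B0 // R0) = card (B1 // R1)"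
  using bij_betw_same_card[OF bij_betw_quotients[OF assms]] .

lemma classes_within_coset:
  assumes A: "add_subgroup A" and B: "add_subgroup B" and AB: "A \<subseteq> B" and c: "c \<in> C"
  defines "Y \<equiv> coset_rel C B `` {c}"
  shows "{X \<in> C // coset_rel C A. X \<subseteq> Y} = Y // coset_rel Y A"
proof -
  have YC: "Y \<subseteq> C" unfolding Y_def coset_rel_def by auto
  have same_class: "coset_rel C A `` {c'} = coset_rel Y A `` {c'}" if "c' \<in> Y" for c'
  proof -
    have "v \<in> Y" if "v \<in> C" "c' - v \<in> A" for v
    proof -
      have "c - c' \<in> B" using \<open>c' \<in> Y\<close> unfolding Y_def coset_rel_def by auto
      moreover have "c' - v \<in> B" using that AB by auto
      ultimately have "(c - c') + (c' - v) \<in> B" using add_subgroup_add[OF B] by blast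
      thus ?thesis using that c unfolding Y_def coset_rel_def by auto
    qed
    thus ?thesis using that YC unfolding coset_rel_def by auto
  qed
  show ?thesis
  proof
    show "{X \<in> C // coset_rel C A. X \<subseteq> Y} \<subseteq> Y // coset_rel Y A"
    proof
      fix X assume "X \<in> {X \<in> C // coset_rel C A. X \<subseteq> Y}"
      then obtain c' where c': "c' \<in> C" "X = coset_rel C A `` {c'}" "X \<subseteq> Y"
        by (auto elim: quotientE)
      have "c' \<in> Y" using c' add_subgroup_zero[OF A] unfolding coset_rel_def by auto
      thus "X \<in> Y // coset_rel Y A" using same_class c' by (auto intro: quotientI)
    qed
    show "Y // coset_rel Y A \<subseteq> {X \<in> C // coset_rel C A. X \<subseteq> Y}"
    proof
      fix X assume "X \<in> Y // coset_rel Y A"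
      then obtain c' where c': "c' \<in> Y" "X = coset_rel Y A `` {c'}" by (auto elim: quotientE)
      have "X = coset_rel C A `` {c'}" "c' \<in> C" using same_class[OF c'(1)] c' YC by auto
      moreover have "X \<subseteq> Y" using c' unfolding coset_rel_def by auto
      ultimately show "X \<in> {X \<in> C // coset_rel C A. X \<subseteq> Y}" by (auto intro: quotientI)
    qed
  qed
qed

lemma card_quotient_coset:
  assumes A: "add_subgroup A" and C: "add_subgroup C" and BC: "B \<subseteq> C" and c: "c \<in> C"
  defines "Y \<equiv> coset_rel C B `` {c}"
  shows "card (Y // coset_rel Y A) = card (B // coset_rel B A)"
proof (rule card_quotient_eq[where f = "\<lambda>b. c - b", symmetric])
  show "equiv B (coset_rel B A)" "equiv Y (coset_rel Y A)" using equiv_coset_rel[OF A] by auto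
  show "c - b \<in> Y" if "b \<in> B" for b
    using add_subgroup_diff[OF C c] that BC c unfolding Y_def coset_rel_def by auto
  show "\<exists>a\<in>B. (c - a, y) \<in> coset_rel Y A" if "y \<in> Y" for y
    using that add_subgroup_zero[OF A] unfolding Y_def coset_rel_def by (intro bexI[of _ "c - y"]) auto
  show "(a, a') \<in> coset_rel B A \<longleftrightarrow> (c - a, c - a') \<in> coset_rel Y A" if "a \<in> B" "a' \<in> B" for a a'
  proof -
    have "c - a \<in> Y" "c - a' \<in> Y"
      using that add_subgroup_diff[OF C c] BC c unfolding Y_def coset_rel_def by auto
    moreover have "a - a' \<in> A \<longleftrightarrow> (c - a) - (c - a') \<in> A"
      using add_subgroup_uminus[OF A, of "a - a'"] add_subgroup_uminus[OF A, of "a' - a"]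
      by (auto simp: algebra_simps)
    ultimately show ?thesis using that unfolding coset_rel_def by auto
  qed
qed

lemma quotient_subset_quotient:
  assumes A: "add_subgroup A" and B: "add_subgroup B" and AB: "A \<subseteq> B" and BC: "B \<subseteq> C"
  shows "B // coset_rel B A \<subseteq> C // coset_rel C A"
proof
  fix X assume "X \<in> B // coset_rel B A"
  then obtain b where b: "b \<in> B" "X = coset_rel B A `` {b}" by (auto elim: quotientE)
  have "v \<in> B" if "v \<in> C" "b - v \<in> A" for v
    using add_subgroup_diff[OF B b(1), of "b - v"] that AB by auto
  hence "X = coset_rel C A `` {b}" using b BC unfolding coset_rel_def by auto
  thus "X \<in> C // coset_rel C A" using b BC by (auto intro: quotientI)
qed

lemma quotient_image_quotient:
  assumes A: "add_subgroup A" and B: "add_subgroup B" and AB: "A \<subseteq> B"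
  shows "C // coset_rel C B = (\<lambda>X. coset_rel C B `` X) ` (C // coset_rel C A)"
proof -
  have coarsen: "coset_rel C B `` (coset_rel C A `` {c}) = coset_rel C B `` {c}" if "c \<in> C" for c
  proof
    show "coset_rel C B `` coset_rel C A `` {c} \<subseteq> coset_rel C B `` {c}"
      using equiv_coset_rel[OF B, of C] AB unfolding equiv_def trans_def coset_rel_def by blast
    show "coset_rel C B `` {c} \<subseteq> coset_rel C B `` coset_rel C A `` {c}"
      using that add_subgroup_zero[OF A] unfolding coset_rel_def by auto
  qed
  show ?thesis
  proof
    show "C // coset_rel C B \<subseteq> (\<lambda>X. coset_rel C B `` X) ` (C // coset_rel C A)"
    proof
      fix Y assume "Y \<in> C // coset_rel C B"
      then obtain c where c: "c \<in> C" "Y = coset_rel C B `` {c}" by (blast elim: quotientE)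
      hence "Y = coset_rel C B `` (coset_rel C A `` {c})" using coarsen by simp
      moreover have "coset_rel C A `` {c} \<in> C // coset_rel C A" using c by (blast intro: quotientI)
      ultimately show "Y \<in> (\<lambda>X. coset_rel C B `` X) ` (C // coset_rel C A)" by blast
    qed
    show "(\<lambda>X. coset_rel C B `` X) ` (C // coset_rel C A) \<subseteq> C // coset_rel C B"
      using coarsen by (force elim!: quotientE intro: quotientI)
  qed
qed

text \<open>The tower law holds without finiteness assumptions, since \<open>card\<close> is \<open>0\<close> on infinite sets.\<close>
lemma subgroup_index_tower:
  assumes A: "add_subgroup A" and B: "add_subgroup B" and C: "add_subgroup C"
    and AB: "A \<subseteq> B" and BC: "B \<subseteq> C"
  shows "subgroup_index C A = subgroup_index C B * subgroup_index B A"
proof (cases "finite (C // coset_rel C B) \<and> finite (B // coset_rel B A)")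
  case True
  define S where "S Y = {X \<in> C // coset_rel C A. X \<subseteq> Y}" for Y
  have classes: "C // coset_rel C A = (\<Union>Y \<in> C // coset_rel C B. S Y)"
  proof
    show "C // coset_rel C A \<subseteq> (\<Union>Y \<in> C // coset_rel C B. S Y)"
    proof
      fix X assume X: "X \<in> C // coset_rel C A"
      then obtain c where c: "c \<in> C" "X = coset_rel C A `` {c}" by (auto elim: quotientE)
      have "X \<subseteq> coset_rel C B `` {c}" using c AB unfolding coset_rel_def by auto
      moreover have "coset_rel C B `` {c} \<in> C // coset_rel C B" using c by (auto intro: quotientI)
      ultimately show "X \<in> (\<Union>Y \<in> C // coset_rel C B. S Y)" using X unfolding S_def by blast
    qed
  qed (auto simp: S_def)
  have card_S: "card (S Y) = card (B // coset_rel B A)" if "Y \<in> C // coset_rel C B" for Y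
    using that classes_within_coset[OF A B AB] card_quotient_coset[OF A C BC]
    unfolding S_def by (auto elim!: quotientE)
  have finite_S: "finite (S Y)" if "Y \<in> C // coset_rel C B" for Y
  proof -
    have "B // coset_rel B A \<noteq> {}" using add_subgroup_zero[OF B] by (auto simp: quotient_def)
    thus ?thesis using card_S[OF that] True by (metis card_eq_0_iff card.infinite)
  qed
  have disjoint: "S Y1 \<inter> S Y2 = {}"
    if "Y1 \<in> C // coset_rel C B" "Y2 \<in> C // coset_rel C B" "Y1 \<noteq> Y2" for Y1 Y2
  proof -
    have "Y1 \<inter> Y2 = {}" using quotient_disj[OF equiv_coset_rel[OF B] that(1,2)] that(3) by auto
    moreover have "X \<noteq> {}" if "X \<in> C // coset_rel C A" for X
      using that equiv_coset_rel[OF A, of C] by (auto elim!: quotientE simp: equiv_def refl_on_def)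
    ultimately show ?thesis unfolding S_def by blast
  qed
  have "card (C // coset_rel C A) = (\<Sum>Y \<in> C // coset_rel C B. card (S Y))"
    unfolding classes using True finite_S disjoint by (intro card_UN_disjoint) auto
  also have "\<dots> = card (C // coset_rel C B) * card (B // coset_rel B A)"
    using card_S by simp
  finally show ?thesis unfolding subgroup_index_def .
next
  case False
  hence "infinite (C // coset_rel C A)"
    using quotient_subset_quotient[OF A B AB BC] quotient_image_quotient[OF A B AB, of C]
    by (metis finite_imageI finite_subset)
  thus ?thesis using False unfolding subgroup_index_def by auto
qed

lemma add_subgroup_sums:
  assumes A: "add_subgroup A" and W: "add_subgroup W"
  shows "add_subgroup {a + w | a w. a \<in> A \<and> w \<in> W}"
  unfolding add_subgroup_def
proof (intro conjI ballI)
  show "0 \<in> {a + w | a w. a \<in> A \<and> w \<in> W}"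
    using add_subgroup_zero[OF A] add_subgroup_zero[OF W] by force
  fix u v assume "u \<in> {a + w | a w. a \<in> A \<and> w \<in> W}" "v \<in> {a + w | a w. a \<in> A \<and> w \<in> W}"
  then obtain a w a' w' where "u = a + w" "v = a' + w'" "a \<in> A" "a' \<in> A" "w \<in> W" "w' \<in> W"
    by blast
  moreover have "u - v = (a - a') + (w - w')" using calculation by (simp add: algebra_simps)
  ultimately show "u - v \<in> {a + w | a w. a \<in> A \<and> w \<in> W}"
    using add_subgroup_diff[OF A] add_subgroup_diff[OF W] by blast
qed

lemma card_quotient_Int_eq_card_quotient_sums:
  assumes A: "add_subgroup A" and W: "add_subgroup W"
  defines "S \<equiv> {a + w | a w. a \<in> A \<and> w \<in> W}"
  shows "card (W // coset_rel W (A \<inter> W)) = card (S // coset_rel S A)"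
proof (rule card_quotient_eq[where f = "\<lambda>w. w"])
  show "equiv W (coset_rel W (A \<inter> W))" "equiv S (coset_rel S A)"
    using equiv_coset_rel add_subgroup_Int[OF A W] A by auto
  show "w \<in> S" if "w \<in> W" for w
    using that add_subgroup_zero[OF A] unfolding S_def by force
  show "\<exists>w\<in>W. (w, s) \<in> coset_rel S A" if s: "s \<in> S" for s
  proof -
    obtain a w where aw: "s = a + w" "a \<in> A" "w \<in> W" using s unfolding S_def by blast
    have "w \<in> S" using add_subgroup_zero[OF A] aw(3) unfolding S_def by force
    moreover have "w - s \<in> A" using aw add_subgroup_uminus[OF A] by simp
    ultimately show ?thesis using aw s unfolding coset_rel_def by blast
  qed
  show "(w, w') \<in> coset_rel W (A \<inter> W) \<longleftrightarrow> (w, w') \<in> coset_rel S A" if "w \<in> W" "w' \<in> W" for w w'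
  proof -
    have "w \<in> S" "w' \<in> S" using add_subgroup_zero[OF A] that unfolding S_def by force+
    moreover have "w - w' \<in> W" using add_subgroup_diff[OF W] that by blast
    ultimately show ?thesis using that unfolding coset_rel_def by auto
  qed
qed

section \<open>Lattices of finitely supported vectors\<close>

definition supported_on :: "'e set \<Rightarrow> ('e \<Rightarrow> int) set" where
  "supported_on S = {t. \<forall>e. e \<notin> S \<longrightarrow> t e = 0}"

definition restrict_vec :: "'e set \<Rightarrow> ('e \<Rightarrow> int) \<Rightarrow> ('e \<Rightarrow> int)" where
  "restrict_vec S t = (\<lambda>e. if e \<in> S then t e else 0)"

lemma restrict_vec_zero [simp]: "restrict_vec S 0 = 0"
  by (simp add: restrict_vec_def fun_eq_iff)

lemma restrict_vec_supported_on [simp]: "restrict_vec S t \<in> supported_on S"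
  by (simp add: restrict_vec_def supported_on_def)

lemma restrict_vec_diff: "restrict_vec S (t - u) = restrict_vec S t - restrict_vec S u"
  by (auto simp: restrict_vec_def)

lemma restrict_vec_id: "t \<in> supported_on S \<Longrightarrow> restrict_vec S t = t"
  by (auto simp: restrict_vec_def supported_on_def)

lemma add_subgroup_supported_on: "add_subgroup (supported_on S)"
  unfolding add_subgroup_def supported_on_def by auto

lemma supported_on_empty: "supported_on {} = {0}"
  by (auto simp: supported_on_def fun_eq_iff)

lemma add_subgroup_restrict_vec_image:
  assumes A: "add_subgroup A"
  shows "add_subgroup (restrict_vec S ` A)"
  unfolding add_subgroup_def
proof (intro conjI ballI)
  show "0 \<in> restrict_vec S ` A"
    using add_subgroup_zero[OF A] by (metis image_eqI restrict_vec_zero)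
  fix a b assume "a \<in> restrict_vec S ` A" "b \<in> restrict_vec S ` A"
  thus "a - b \<in> restrict_vec S ` A"
    using add_subgroup_diff[OF A] by (auto simp: restrict_vec_diff[symmetric])
qed

lemma card_quotient_restrict_vec:
  assumes disj: "E1 \<inter> E2 = {}" and A: "add_subgroup A" and A_sub: "A \<subseteq> supported_on (E1 \<union> E2)"
  defines "B \<equiv> {a + w | a w. a \<in> A \<and> w \<in> supported_on E2}"
  shows "card (supported_on (E1 \<union> E2) // coset_rel (supported_on (E1 \<union> E2)) B) =
    card (supported_on E1 // coset_rel (supported_on E1) (restrict_vec E1 ` A))"
proof (rule card_quotient_eq[where f = "restrict_vec E1"])
  show "equiv (supported_on (E1 \<union> E2)) (coset_rel (supported_on (E1 \<union> E2)) B)"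
    using equiv_coset_rel add_subgroup_sums[OF A add_subgroup_supported_on] unfolding B_def by blast
  show "equiv (supported_on E1) (coset_rel (supported_on E1) (restrict_vec E1 ` A))"
    using equiv_coset_rel add_subgroup_restrict_vec_image[OF A] by blast
  show "restrict_vec E1 u \<in> supported_on E1" for u by simp
  show "\<exists>u\<in>supported_on (E1 \<union> E2). (restrict_vec E1 u, b) \<in> coset_rel (supported_on E1) (restrict_vec E1 ` A)"
    if "b \<in> supported_on E1" for b
  proof -
    have "b \<in> supported_on (E1 \<union> E2)" using that by (auto simp: supported_on_def)
    moreover have "restrict_vec E1 b - b \<in> restrict_vec E1 ` A"
      using add_subgroup_zero[OF A] restrict_vec_id[OF that] by (metis diff_self image_eqI restrict_vec_zero)
    ultimately show ?thesis using that unfolding coset_rel_def by auto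
  qed
  show "(u, v) \<in> coset_rel (supported_on (E1 \<union> E2)) B \<longleftrightarrow>
      (restrict_vec E1 u, restrict_vec E1 v) \<in> coset_rel (supported_on E1) (restrict_vec E1 ` A)"
    if uv: "u \<in> supported_on (E1 \<union> E2)" "v \<in> supported_on (E1 \<union> E2)" for u v
  proof -
    have "u - v \<in> B \<longleftrightarrow> restrict_vec E1 (u - v) \<in> restrict_vec E1 ` A"
    proof
      assume "u - v \<in> B"
      then obtain a w where aw: "u - v = a + w" "a \<in> A" "w \<in> supported_on E2" unfolding B_def by blast
      have "restrict_vec E1 (u - v) = restrict_vec E1 a"
        using aw disj by (auto simp: restrict_vec_def supported_on_def fun_eq_iff)
      thus "restrict_vec E1 (u - v) \<in> restrict_vec E1 ` A" using aw by auto
    next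
      assume "restrict_vec E1 (u - v) \<in> restrict_vec E1 ` A"
      then obtain a where a: "a \<in> A" "restrict_vec E1 (u - v) = restrict_vec E1 a" by auto
      have "(u - v - a) e = 0" if "e \<notin> E2" for e
        using fun_cong[OF a(2), of e] uv A_sub a(1) that
        by (cases "e \<in> E1") (auto simp: restrict_vec_def supported_on_def)
      hence "u - v - a \<in> supported_on E2" by (simp add: supported_on_def)
      moreover have "u - v = a + (u - v - a)" by simp
      ultimately show "u - v \<in> B" unfolding B_def using a(1) by blast
    qed
    thus ?thesis using uv unfolding coset_rel_def restrict_vec_diff by auto
  qed
qed

lemma subgroup_index_supported_on_Un:
  assumes disj: "E1 \<inter> E2 = {}" and A: "add_subgroup A" and A_sub: "A \<subseteq> supported_on (E1 \<union> E2)"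
  shows "subgroup_index (supported_on (E1 \<union> E2)) A =
    subgroup_index (supported_on E1) (restrict_vec E1 ` A) *
    subgroup_index (supported_on E2) (A \<inter> supported_on E2)"
proof -
  define B where "B = {a + w | a w. a \<in> A \<and> w \<in> supported_on E2}"
  have B: "add_subgroup B"
    unfolding B_def by (rule add_subgroup_sums[OF A add_subgroup_supported_on])
  have AB: "A \<subseteq> B"
    using add_subgroup_zero[OF add_subgroup_supported_on[of E2]] unfolding B_def
    by (metis (mono_tags, lifting) add.right_neutral mem_Collect_eq subsetI)
  have BC: "B \<subseteq> supported_on (E1 \<union> E2)" using A_sub unfolding B_def supported_on_def by auto
  show ?thesis
    using subgroup_index_tower[OF A B add_subgroup_supported_on AB BC]
      card_quotient_restrict_vec[OF disj A A_sub, folded B_def]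
      card_quotient_Int_eq_card_quotient_sums[OF A add_subgroup_supported_on[of E2], folded B_def]
    unfolding subgroup_index_def by simp
qed

lemma subgroup_index_supported_on_empty:
  "add_subgroup A \<Longrightarrow> subgroup_index (supported_on {}) A = 1"
  by (simp add: subgroup_index_def supported_on_empty quotient_def)

lemma card_quotient_by_zero: "card (S // coset_rel S {0}) = card S"
proof -
  have "S // coset_rel S {0} = (\<lambda>x. {x}) ` S" unfolding quotient_def coset_rel_def by auto
  thus ?thesis by (simp add: card_image)
qed

lemma subgroup_index_multiples_single:
  fixes c :: int assumes c: "c \<noteq> 0"
  shows "subgroup_index (supported_on {e}) {t \<in> supported_on {e}. c dvd t e} = nat \<bar>c\<bar>"
proof -
  define M where "M = {t \<in> supported_on {e}. c dvd t e}"
  define f where "f k = (\<lambda>e'. if e' = e then k else (0::int))" for k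
  have "card ({0..<\<bar>c\<bar>} // coset_rel {0..<\<bar>c\<bar>} {0}) = card (supported_on {e} // coset_rel (supported_on {e}) M)"
  proof (rule card_quotient_eq[where f = f])
    show "equiv {0..<\<bar>c\<bar>} (coset_rel {0..<\<bar>c\<bar>} {0})"
      by (rule equiv_coset_rel) (simp add: add_subgroup_def)
    show "equiv (supported_on {e}) (coset_rel (supported_on {e}) M)"
      by (rule equiv_coset_rel) (auto simp: add_subgroup_def supported_on_def M_def)
    show "f a \<in> supported_on {e}" for a by (simp add: f_def supported_on_def)
    show "\<exists>a\<in>{0..<\<bar>c\<bar>}. (f a, b) \<in> coset_rel (supported_on {e}) M" if "b \<in> supported_on {e}" for b
    proof
      have "c dvd (b e mod \<bar>c\<bar> - b e)"
        by (metis abs_dvd_iff dvd_minus_iff minus_diff_eq mod_eq_dvd_iff mod_mod_trivial)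
      thus "(f (b e mod \<bar>c\<bar>), b) \<in> coset_rel (supported_on {e}) M"
        using that unfolding coset_rel_def M_def by (auto simp: f_def supported_on_def)
      show "b e mod \<bar>c\<bar> \<in> {0..<\<bar>c\<bar>}" using c by simp
    qed
    show "(a, a') \<in> coset_rel {0..<\<bar>c\<bar>} {0} \<longleftrightarrow> (f a, f a') \<in> coset_rel (supported_on {e}) M"
      if "a \<in> {0..<\<bar>c\<bar>}" "a' \<in> {0..<\<bar>c\<bar>}" for a a'
    proof -
      have "c dvd a - a' \<longleftrightarrow> a = a'"
        using that dvd_imp_le_int[of "a - a'" c] by (cases "a = a'") auto
      moreover have "f a - f a' = f (a - a')" by (auto simp: f_def fun_eq_iff)
      ultimately show ?thesis
        using that unfolding coset_rel_def M_def by (auto simp: f_def supported_on_def)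
    qed
  qed
  thus ?thesis using c unfolding subgroup_index_def M_def card_quotient_by_zero by simp
qed

section \<open>Trees\<close>

definition adj_on :: "nat set \<Rightarrow> (nat \<Rightarrow> nat \<Rightarrow> nat) \<Rightarrow> nat \<Rightarrow> nat \<Rightarrow> bool" where
  "adj_on V x i j \<longleftrightarrow> i \<in> V \<and> j \<in> V \<and> i \<noteq> j \<and> x i j \<noteq> 0"

definition has_cycle_on :: "nat set \<Rightarrow> (nat \<Rightarrow> nat \<Rightarrow> nat) \<Rightarrow> bool" where
  "has_cycle_on V x \<longleftrightarrow> (\<exists>vs. distinct vs \<and> 3 \<le> length vs \<and> set vs \<subseteq> V \<and>
      (\<forall>k<length vs. adj_on V x (vs ! k) (vs ! ((k + 1) mod length vs))))"

definition tree_on :: "nat set \<Rightarrow> (nat \<Rightarrow> nat \<Rightarrow> nat) \<Rightarrow> bool" where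
  "tree_on V x \<longleftrightarrow> finite V \<and> V \<noteq> {} \<and> (\<forall>i\<in>V. \<forall>j\<in>V. x i j = x j i) \<and>
     (\<forall>i\<in>V. \<forall>j\<in>V. (adj_on V x)\<^sup>*\<^sup>* i j) \<and> \<not> has_cycle_on V x"

definition path_on :: "nat set \<Rightarrow> (nat \<Rightarrow> nat \<Rightarrow> nat) \<Rightarrow> nat list \<Rightarrow> bool" where
  "path_on V x vs \<longleftrightarrow> distinct vs \<and> set vs \<subseteq> V \<and>
     (\<forall>k. Suc k < length vs \<longrightarrow> adj_on V x (vs ! k) (vs ! Suc k))"

lemma adj_on_sym: "\<forall>i\<in>V. \<forall>j\<in>V. x i j = x j i \<Longrightarrow> adj_on V x i j \<Longrightarrow> adj_on V x j i"
  unfolding adj_on_def by auto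

lemma tree_on_cong:
  assumes "tree_on V x" "\<forall>i\<in>V. \<forall>j\<in>V. x' i j = x' j i" "\<And>i j. x' i j \<noteq> 0 \<longleftrightarrow> x i j \<noteq> 0"
  shows "tree_on V x'"
proof -
  have "adj_on V x' = adj_on V x" using assms(3) by (auto simp: adj_on_def fun_eq_iff)
  moreover have "has_cycle_on V x' = has_cycle_on V x" unfolding has_cycle_on_def calculation ..
  ultimately show ?thesis using assms unfolding tree_on_def by simp
qed

lemma path_on_snoc:
  assumes "path_on V x vs" "vs \<noteq> []" "j \<notin> set vs" "adj_on V x (last vs) j"
  shows "path_on V x (vs @ [j])"
  unfolding path_on_def
proof (intro conjI allI impI)
  show "distinct (vs @ [j])" "set (vs @ [j]) \<subseteq> V"
    using assms unfolding path_on_def adj_on_def by auto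
  fix k assume k: "Suc k < length (vs @ [j])"
  show "adj_on V x ((vs @ [j]) ! k) ((vs @ [j]) ! Suc k)"
  proof (cases "Suc k < length vs")
    case True
    thus ?thesis using assms(1) unfolding path_on_def by (simp add: nth_append)
  next
    case False
    hence "k = length vs - 1" using k by simp
    thus ?thesis using assms(2,4) by (simp add: nth_append last_conv_nth)
  qed
qed

lemma has_cycle_on_path_chord:
  assumes vs: "path_on V x vs" and k: "k + 3 \<le> length vs"
    and chord: "adj_on V x (last vs) (vs ! k)"
  shows "has_cycle_on V x"
  unfolding has_cycle_on_def
proof (intro exI conjI allI impI)
  define cs where "cs = drop k vs"
  have len: "length cs = length vs - k" unfolding cs_def by simp
  show "distinct cs" "set cs \<subseteq> V"
    using vs unfolding cs_def path_on_def by (auto dest: in_set_dropD)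
  show "3 \<le> length cs" using len k by simp
  fix i assume i: "i < length cs"
  show "adj_on V x (cs ! i) (cs ! ((i + 1) mod length cs))"
  proof (cases "i + 1 < length cs")
    case True
    hence "Suc (k + i) < length vs" using len by simp
    thus ?thesis using True vs unfolding path_on_def cs_def by (simp add: add.commute add_Suc_right)
  next
    case False
    hence "i + 1 = length cs" using i by simp
    hence "k + i = length vs - 1" "(i + 1) mod length cs = 0" using len by auto
    moreover have "vs \<noteq> []" using k by auto
    ultimately have "cs ! i = last vs" "(i + 1) mod length cs = 0"
      unfolding cs_def by (auto simp: last_conv_nth)
    moreover have "cs ! 0 = vs ! k" using k unfolding cs_def by simp
    ultimately show ?thesis using chord by simp
  qed
qed

text \<open>The end vertex of a longest path has no neighbour outside the path, and by acyclicity none on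
  it other than its predecessor.\<close>
lemma tree_on_obtain_leaf:
  assumes T: "tree_on V x" and two: "2 \<le> card V"
  obtains l p where "l \<in> V" "p \<in> V" "l \<noteq> p" "x l p \<noteq> 0" "\<And>j. adj_on V x l j \<Longrightarrow> j = p"
proof -
  have fin: "finite V" and con: "\<forall>i\<in>V. \<forall>j\<in>V. (adj_on V x)\<^sup>*\<^sup>* i j" and acyclic: "\<not> has_cycle_on V x"
    using T unfolding tree_on_def by auto
  obtain a b where ab: "a \<in> V" "b \<in> V" "a \<noteq> b"
    using two card_le_Suc0_iff_eq[OF fin] by (metis One_nat_def not_less_eq_eq numeral_2_eq_2)
  then obtain c where "adj_on V x a c" using con by (metis converse_rtranclpE)
  hence start: "path_on V x [a, c]" unfolding path_on_def adj_on_def by (auto simp: nth_Cons split: nat.splits)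
  have bounded: "length vs < card V + 1" if "path_on V x vs \<and> 2 \<le> length vs" for vs
    using that distinct_card[of vs] card_mono[OF fin, of "set vs"] unfolding path_on_def by auto
  obtain vs where vs: "path_on V x vs" "2 \<le> length vs"
    and longest: "\<And>ws. path_on V x ws \<and> 2 \<le> length ws \<Longrightarrow> length ws \<le> length vs"
    using ex_has_greatest_nat[of "\<lambda>vs. path_on V x vs \<and> 2 \<le> length vs" "[a,c]" length "card V + 1"]
      start bounded by auto
  define L where "L = length vs"
  define l where "l = vs ! (L - 1)"
  define p where "p = vs ! (L - 2)"
  have "Suc (L - 2) < length vs" "Suc (L - 2) = L - 1" using vs(2) unfolding L_def by auto
  hence "adj_on V x p l" using vs(1) unfolding path_on_def p_def l_def by metis
  hence lp: "l \<in> V" "p \<in> V" "l \<noteq> p" "x l p \<noteq> 0"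
    using T unfolding adj_on_def tree_on_def by auto
  have "vs \<noteq> []" using vs(2) by auto
  hence l_last: "last vs = l" unfolding l_def L_def by (simp add: last_conv_nth)
  have "j = p" if j: "adj_on V x l j" for j
  proof (rule ccontr)
    assume "j \<noteq> p"
    show False
    proof (cases "j \<in> set vs")
      case False
      hence "path_on V x (vs @ [j])" using path_on_snoc[OF vs(1) \<open>vs \<noteq> []\<close>] j l_last by simp
      thus False using longest[of "vs @ [j]"] vs(2) by simp
    next
      case True
      then obtain k where k: "k < L" "vs ! k = j" unfolding L_def by (metis in_set_conv_nth)
      have "k \<noteq> L - 1" "k \<noteq> L - 2" using j k \<open>j \<noteq> p\<close> unfolding l_def p_def adj_on_def by auto
      hence "k + 3 \<le> length vs" using k vs(2) unfolding L_def by linarith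
      thus False using has_cycle_on_path_chord[OF vs(1)] j k(2) l_last acyclic by blast
    qed
  qed
  with lp that show thesis by blast
qed

lemma rtranclp_adj_on_remove_leaf:
  assumes sym: "\<forall>i\<in>V. \<forall>j\<in>V. x i j = x j i"
    and leaf: "\<And>j. adj_on V x l j \<Longrightarrow> j = p" and lp: "l \<noteq> p" "p \<in> V"
    and r: "(adj_on V x)\<^sup>*\<^sup>* u v" and u: "u \<in> V" "u \<noteq> l"
  shows "(adj_on (V - {l}) x)\<^sup>*\<^sup>* u (if v = l then p else v)"
  using r
proof (induction rule: rtranclp_induct)
  case base thus ?case using u by auto
next
  case (step w v)
  show ?case
  proof (cases "w = l")
    case True
    thus ?thesis using leaf step lp by auto
  next
    case False
    hence IH: "(adj_on (V - {l}) x)\<^sup>*\<^sup>* u w" using step(3) by auto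
    show ?thesis
    proof (cases "v = l")
      case True
      thus ?thesis using IH leaf adj_on_sym[OF sym step(2)] by auto
    next
      case False
      hence "adj_on (V - {l}) x w v" using step(2) \<open>w \<noteq> l\<close> unfolding adj_on_def by auto
      thus ?thesis using IH False by (auto intro: rtranclp.rtrancl_into_rtrancl)
    qed
  qed
qed

lemma tree_on_remove_leaf:
  assumes T: "tree_on V x" and lp: "l \<noteq> p" "p \<in> V" and leaf: "\<And>j. adj_on V x l j \<Longrightarrow> j = p"
  shows "tree_on (V - {l}) x"
  unfolding tree_on_def
proof (intro conjI)
  have sym: "\<forall>i\<in>V. \<forall>j\<in>V. x i j = x j i" and con: "\<forall>i\<in>V. \<forall>j\<in>V. (adj_on V x)\<^sup>*\<^sup>* i j"
    using T unfolding tree_on_def by auto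
  show "finite (V - {l})" "V - {l} \<noteq> {}" "\<forall>i\<in>V - {l}. \<forall>j\<in>V - {l}. x i j = x j i"
    using T lp unfolding tree_on_def by auto
  show "\<forall>i\<in>V - {l}. \<forall>j\<in>V - {l}. (adj_on (V - {l}) x)\<^sup>*\<^sup>* i j"
  proof (intro ballI)
    fix i j assume "i \<in> V - {l}" "j \<in> V - {l}"
    thus "(adj_on (V - {l}) x)\<^sup>*\<^sup>* i j"
      using rtranclp_adj_on_remove_leaf[OF sym leaf lp, of i j] con by auto
  qed
  show "\<not> has_cycle_on (V - {l}) x"
  proof
    assume "has_cycle_on (V - {l}) x"
    hence "has_cycle_on V x" unfolding has_cycle_on_def adj_on_def by blast
    thus False using T unfolding tree_on_def by simp
  qed
qed

section \<open>Flows on the edges of a tree\<close>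

definition edges_on :: "nat set \<Rightarrow> (nat \<Rightarrow> nat \<Rightarrow> nat) \<Rightarrow> (nat \<times> nat) set" where
  "edges_on V x = {(i, j). i < j \<and> i \<in> V \<and> j \<in> V \<and> x i j \<noteq> 0}"

definition degree_on :: "nat set \<Rightarrow> (nat \<Rightarrow> nat \<Rightarrow> nat) \<Rightarrow> nat \<Rightarrow> nat" where
  "degree_on V x k = card {j \<in> V. j \<noteq> k \<and> x k j \<noteq> 0}"

definition boundary :: "(nat \<times> nat) set \<Rightarrow> ((nat \<times> nat) \<Rightarrow> int) \<Rightarrow> nat \<Rightarrow> int" where
  "boundary E t k = (\<Sum>e\<in>E. (if fst e = k then t e else 0) - (if snd e = k then t e else 0))"

lemma finite_edges_on: "finite V \<Longrightarrow> finite (edges_on V x)"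
  by (rule finite_subset[of _ "V \<times> V"]) (auto simp: edges_on_def)

lemma edges_on_cong: "(\<And>i j. x' i j \<noteq> 0 \<longleftrightarrow> x i j \<noteq> 0) \<Longrightarrow> edges_on V x' = edges_on V x"
  by (auto simp: edges_on_def)

lemma degree_on_cong: "(\<And>i j. x' i j \<noteq> 0 \<longleftrightarrow> x i j \<noteq> 0) \<Longrightarrow> degree_on V x' = degree_on V x"
  by (auto simp: degree_on_def fun_eq_iff)

lemma boundary_insert:
  "finite E \<Longrightarrow> e \<notin> E \<Longrightarrow> boundary (insert e E) t k =
     boundary E t k + (if fst e = k then t e else 0) - (if snd e = k then t e else 0)"
  unfolding boundary_def by simp

lemma boundary_diff: "boundary E (t - s) k = boundary E t k - boundary E s k"
  unfolding boundary_def by (simp add: sum_subtractf[symmetric]) (rule sum.cong, auto)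

lemma boundary_cong: "(\<And>e. e \<in> E \<Longrightarrow> t e = s e) \<Longrightarrow> boundary E t k = boundary E s k"
  unfolding boundary_def by (rule sum.cong) auto

lemma boundary_zero_on: "(\<And>e. e \<in> E \<Longrightarrow> t e = 0) \<Longrightarrow> boundary E t k = 0"
  unfolding boundary_def by (rule sum.neutral) auto

lemma boundary_not_incident: "(\<And>e. e \<in> E \<Longrightarrow> fst e \<noteq> k \<and> snd e \<noteq> k) \<Longrightarrow> boundary E t k = 0"
  unfolding boundary_def by (rule sum.neutral) auto

lemma sum_boundary:
  assumes "finite V" "E \<subseteq> V \<times> V" "finite E"
  shows "(\<Sum>k\<in>V. boundary E t k) = 0"
proof -
  have "(\<Sum>k\<in>V. boundary E t k) =
      (\<Sum>e\<in>E. \<Sum>k\<in>V. (if fst e = k then t e else 0) - (if snd e = k then t e else 0))"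
    unfolding boundary_def by (rule sum.swap)
  also have "\<dots> = 0"
  proof (rule sum.neutral, rule ballI)
    fix e assume "e \<in> E"
    hence "fst e \<in> V" "snd e \<in> V" using assms(2) by auto
    thus "(\<Sum>k\<in>V. (if fst e = k then t e else 0) - (if snd e = k then t e else 0)) = 0"
      using assms(1) by (simp add: sum_subtractf)
  qed
  finally show ?thesis .
qed

lemma card_edges_incident:
  assumes sym: "\<forall>i\<in>V. \<forall>j\<in>V. x i j = x j i" and p: "p \<in> V"
  shows "card {e \<in> edges_on V x. fst e = p \<or> snd e = p} = degree_on V x p"
proof -
  have "bij_betw (\<lambda>j. (min p j, max p j)) {j \<in> V. j \<noteq> p \<and> x p j \<noteq> 0}
      {e \<in> edges_on V x. fst e = p \<or> snd e = p}"
  proof (rule bij_betw_imageI)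
    show "inj_on (\<lambda>j. (min p j, max p j)) {j \<in> V. j \<noteq> p \<and> x p j \<noteq> 0}"
      by (rule inj_onI) (simp add: min_def max_def split: if_splits)
    show "(\<lambda>j. (min p j, max p j)) ` {j \<in> V. j \<noteq> p \<and> x p j \<noteq> 0} =
        {e \<in> edges_on V x. fst e = p \<or> snd e = p}"
    proof (intro equalityI subsetI)
      fix e assume "e \<in> (\<lambda>j. (min p j, max p j)) ` {j \<in> V. j \<noteq> p \<and> x p j \<noteq> 0}"
      then obtain j where j: "j \<in> V" "j \<noteq> p" "x p j \<noteq> 0" "e = (min p j, max p j)" by blast
      moreover have "x j p \<noteq> 0" using sym j p by metis
      ultimately show "e \<in> {e \<in> edges_on V x. fst e = p \<or> snd e = p}"
        using p by (cases "p < j") (auto simp: edges_on_def)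
    next
      fix e assume "e \<in> {e \<in> edges_on V x. fst e = p \<or> snd e = p}"
      then obtain i j where ij: "e = (i, j)" "i < j" "i \<in> V" "j \<in> V" "x i j \<noteq> 0" "i = p \<or> j = p"
        by (auto simp: edges_on_def)
      have "x j i \<noteq> 0" using ij sym by metis
      show "e \<in> (\<lambda>j. (min p j, max p j)) ` {j \<in> V. j \<noteq> p \<and> x p j \<noteq> 0}"
      proof (cases "i = p")
        case True
        thus ?thesis using ij by (intro image_eqI[of _ _ j]) auto
      next
        case False
        thus ?thesis using ij \<open>x j i \<noteq> 0\<close> by (intro image_eqI[of _ _ i]) auto
      qed
    qed
  qed
  thus ?thesis unfolding degree_on_def by (simp add: bij_betw_same_card)
qed

locale tree_leaf =
  fixes V :: "nat set" and x :: "nat \<Rightarrow> nat \<Rightarrow> nat" and l p :: nat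
  assumes tree: "tree_on V x" and l: "l \<in> V" and p: "p \<in> V" and l_neq_p: "l \<noteq> p"
    and x_lp: "x l p \<noteq> 0" and leaf: "\<And>j. adj_on V x l j \<Longrightarrow> j = p"
begin

abbreviation "V' \<equiv> V - {l}"

definition "leaf_edge = (min l p, max l p)"

text \<open>The orientation of \<open>leaf_edge\<close> seen from the leaf.\<close>
definition "leaf_sign = (if l < p then 1 else - 1 :: int)"

lemma finite_V: "finite V"
  using tree by (simp add: tree_on_def)

lemma sym: "i \<in> V \<Longrightarrow> j \<in> V \<Longrightarrow> x i j = x j i"
  using tree by (simp add: tree_on_def)

lemma tree_remove_leaf: "tree_on V' x"
  using tree_on_remove_leaf[OF tree l_neq_p p leaf] .

lemma card_remove_leaf: "card V' < card V"
  using finite_V l by (rule card_Diff1_less)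

lemma neighbour_leaf: "j \<in> V \<Longrightarrow> j \<noteq> l \<Longrightarrow> x l j \<noteq> 0 \<Longrightarrow> j = p"
  using leaf l unfolding adj_on_def by auto

lemma neighbour_leaf': "j \<in> V \<Longrightarrow> j \<noteq> l \<Longrightarrow> x j l \<noteq> 0 \<Longrightarrow> j = p"
  using neighbour_leaf sym l by fastforce

lemma mult_leaf_edge: "x (fst leaf_edge) (snd leaf_edge) = x l p"
  using sym[OF l p] by (auto simp: leaf_edge_def min_def max_def)

lemma leaf_edge_notin: "leaf_edge \<notin> edges_on V' x"
  unfolding leaf_edge_def edges_on_def by (auto simp: min_def max_def)

lemma edges_on_remove_leaf: "edges_on V x = insert leaf_edge (edges_on V' x)"
proof
  show "edges_on V x \<subseteq> insert leaf_edge (edges_on V' x)"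
  proof
    fix e assume "e \<in> edges_on V x"
    then obtain i j where e: "e = (i, j)" "i < j" "i \<in> V" "j \<in> V" "x i j \<noteq> 0"
      by (auto simp: edges_on_def)
    have "e = leaf_edge" if "i = l \<or> j = l"
      using that neighbour_leaf[of j] neighbour_leaf'[of i] e unfolding leaf_edge_def by auto
    thus "e \<in> insert leaf_edge (edges_on V' x)" using e by (auto simp: edges_on_def)
  qed
  show "insert leaf_edge (edges_on V' x) \<subseteq> edges_on V x"
    using l p l_neq_p x_lp sym[OF l p] unfolding leaf_edge_def
    by (auto simp: edges_on_def min_def max_def)
qed

lemma boundary_remove_leaf:
  "boundary (edges_on V x) t k = boundary (edges_on V' x) t k
     + (if fst leaf_edge = k then t leaf_edge else 0) - (if snd leaf_edge = k then t leaf_edge else 0)"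
  unfolding edges_on_remove_leaf
  by (rule boundary_insert[OF finite_edges_on leaf_edge_notin]) (simp add: finite_V)

lemma boundary_leaf: "boundary (edges_on V x) t l = leaf_sign * t leaf_edge"
proof -
  have "boundary (edges_on V' x) t l = 0"
    by (rule boundary_not_incident) (auto simp: edges_on_def)
  thus ?thesis
    unfolding boundary_remove_leaf using l_neq_p by (simp add: leaf_edge_def leaf_sign_def min_def max_def)
qed

lemma boundary_parent:
  "boundary (edges_on V x) t p = boundary (edges_on V' x) t p - leaf_sign * t leaf_edge"
  unfolding boundary_remove_leaf using l_neq_p by (simp add: leaf_edge_def leaf_sign_def min_def max_def)

lemma boundary_other:
  "k \<noteq> l \<Longrightarrow> k \<noteq> p \<Longrightarrow> boundary (edges_on V x) t k = boundary (edges_on V' x) t k"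
  unfolding boundary_remove_leaf by (simp add: leaf_edge_def min_def max_def)

lemma boundary_fun_upd_leaf_edge:
  "boundary (edges_on V x) (t(leaf_edge := c)) k =
     (if k = l then leaf_sign * c else boundary (edges_on V' x) t k - (if k = p then leaf_sign * c else 0))"
proof -
  have "boundary (edges_on V' x) (t(leaf_edge := c)) k = boundary (edges_on V' x) t k"
    by (rule boundary_cong) (use leaf_edge_notin in auto)
  thus ?thesis
    using boundary_leaf[of "t(leaf_edge := c)"] boundary_parent[of "t(leaf_edge := c)"]
      boundary_other[of k "t(leaf_edge := c)"] l_neq_p
    by auto
qed

lemma fun_upd_leaf_edge_supported_on:
  "t \<in> supported_on (edges_on V' x) \<Longrightarrow> t(leaf_edge := c) \<in> supported_on (edges_on V x)"
  unfolding supported_on_def edges_on_remove_leaf by simp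

lemma leaf_sign_square: "leaf_sign * leaf_sign = 1"
  by (simp add: leaf_sign_def)

lemma dvd_leaf_sign_mult: "a dvd leaf_sign * b \<longleftrightarrow> a dvd b"
  by (simp add: leaf_sign_def)

lemma degree_on_other: "k \<in> V' \<Longrightarrow> k \<noteq> p \<Longrightarrow> degree_on V x k = degree_on V' x k"
  unfolding degree_on_def by (metis (lifting) DiffE DiffI neighbour_leaf' singletonD)

lemma degree_on_parent: "degree_on V x p = Suc (degree_on V' x p)"
proof -
  have "{j \<in> V. j \<noteq> p \<and> x p j \<noteq> 0} = insert l {j \<in> V'. j \<noteq> p \<and> x p j \<noteq> 0}"
    using l p l_neq_p x_lp sym[OF l p] by auto
  thus ?thesis using finite_V by (simp add: degree_on_def)
qed

lemma degree_on_leaf: "degree_on V x l = 1"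
proof -
  have "{j \<in> V. j \<noteq> l \<and> x l j \<noteq> 0} = {p}"
    using neighbour_leaf l_neq_p p x_lp by blast
  thus ?thesis by (simp add: degree_on_def)
qed

end

lemma tree_on_induct [consumes 1, case_names singleton remove_leaf]:
  assumes "tree_on V x"
    and singleton: "\<And>v x. P {v} x"
    and remove_leaf: "\<And>V x l p. tree_leaf V x l p \<Longrightarrow>
      (\<And>x'. tree_on (V - {l}) x' \<Longrightarrow> P (V - {l}) x') \<Longrightarrow> P V x"
  shows "P V x"
  using assms(1)
proof (induction "card V" arbitrary: V x rule: less_induct)
  case less
  have "finite V" "V \<noteq> {}" using less.prems by (auto simp: tree_on_def)
  show ?case
  proof (cases "card V = 1")
    case True
    then obtain v where "V = {v}" by (auto simp: card_Suc_eq)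
    thus ?thesis using singleton by simp
  next
    case False
    moreover have "card V \<noteq> 0" using \<open>finite V\<close> \<open>V \<noteq> {}\<close> by simp
    ultimately have "2 \<le> card V" by linarith
    then obtain l p where "tree_leaf V x l p"
      using tree_on_obtain_leaf[OF less.prems] less.prems by (metis tree_leaf.intro)
    thus ?thesis
      using remove_leaf less.hyps tree_leaf.card_remove_leaf by blast
  qed
qed

section \<open>The lattice of gradient flows\<close>

text \<open>On an edge \<open>(i, j)\<close> the gradient flow of \<open>y\<close> is \<open>x\<^sub>i\<^sub>j r\<^sub>i r\<^sub>j (y\<^sub>i/r\<^sub>i - y\<^sub>j/r\<^sub>j)\<close>.\<close>
definition gradient_flow ::
    "nat set \<Rightarrow> (nat \<Rightarrow> nat \<Rightarrow> nat) \<Rightarrow> (nat \<Rightarrow> int) \<Rightarrow> (nat \<Rightarrow> int) \<Rightarrow> (nat \<times> nat \<Rightarrow> int)" where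
  "gradient_flow V x r y = (\<lambda>e. if e \<in> edges_on V x
     then int (x (fst e) (snd e)) * (r (snd e) * y (fst e) - r (fst e) * y (snd e)) else 0)"

definition gradient_flows :: "nat set \<Rightarrow> (nat \<Rightarrow> nat \<Rightarrow> nat) \<Rightarrow> (nat \<Rightarrow> int) \<Rightarrow> (nat \<times> nat \<Rightarrow> int) set" where
  "gradient_flows V x r = range (gradient_flow V x r)"

definition gradient_index_formula :: "nat set \<Rightarrow> (nat \<Rightarrow> nat \<Rightarrow> nat) \<Rightarrow> (nat \<Rightarrow> int) \<Rightarrow> rat" where
  "gradient_index_formula V x r = (\<Prod>e\<in>edges_on V x. rat_of_nat (x (fst e) (snd e))) *
     (\<Prod>k\<in>V. rat_of_int (r k) powi (int (degree_on V x k) - 1)) * rat_of_int (Gcd (r ` V))"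

lemma gradient_flow_diff: "gradient_flow V x r y - gradient_flow V x r y' = gradient_flow V x r (y - y')"
  by (simp add: gradient_flow_def algebra_simps fun_eq_iff)

lemma gradient_flow_cong: "(\<And>j. j \<in> V \<Longrightarrow> y j = y' j) \<Longrightarrow> gradient_flow V x r y = gradient_flow V x r y'"
  unfolding gradient_flow_def by (rule ext) (auto simp: edges_on_def)

lemma add_subgroup_gradient_flows: "add_subgroup (gradient_flows V x r)"
  unfolding add_subgroup_def gradient_flows_def
proof (intro conjI ballI)
  show "0 \<in> range (gradient_flow V x r)"
    using gradient_flow_diff[of V x r 0 0] by (metis diff_self rangeI)
  fix a b assume "a \<in> range (gradient_flow V x r)" "b \<in> range (gradient_flow V x r)"
  thus "a - b \<in> range (gradient_flow V x r)" by (auto simp: gradient_flow_diff)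
qed

lemma gradient_flows_supported: "gradient_flows V x r \<subseteq> supported_on (edges_on V x)"
  by (auto simp: gradient_flows_def gradient_flow_def supported_on_def)

lemma prod_if_const_power:
  "finite A \<Longrightarrow> (\<Prod>e\<in>A. if P e then (c::'a::comm_monoid_mult) else 1) = c ^ card {e \<in> A. P e}"
  by (simp add: prod.If_cases Int_def conj_commute)

locale weighted_tree_leaf = tree_leaf +
  fixes r :: "nat \<Rightarrow> int"
  assumes r_pos: "\<And>k. k \<in> V \<Longrightarrow> r k > 0"
begin

definition "leaf_gcd = gcd (r p) (r l)"

text \<open>Contracting the leaf: \<open>r\<^sub>p\<close> becomes \<open>gcd r\<^sub>p r\<^sub>l\<close> and the multiplicities of the edges at \<open>p\<close>
  are scaled by \<open>r\<^sub>p / gcd r\<^sub>p r\<^sub>l\<close>; then the gradient flows of the contracted tree are exactly those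
  gradient flows of the original tree that vanish on the leaf edge.\<close>
definition "contracted_weights = r(p := leaf_gcd)"

definition "contracted_mult = (\<lambda>i j. if i = p \<or> j = p then x i j * nat (r p div leaf_gcd) else x i j)"

lemma leaf_gcd_pos: "leaf_gcd > 0"
  using r_pos[OF p] by (simp add: leaf_gcd_def)

lemma parent_cofactor: "(r p div leaf_gcd) * leaf_gcd = r p"
  by (simp add: leaf_gcd_def)

lemma parent_cofactor_pos: "r p div leaf_gcd > 0"
  using parent_cofactor leaf_gcd_pos r_pos[OF p] by (metis zero_less_mult_pos2)

lemma contracted_mult_neq_0_iff: "contracted_mult i j \<noteq> 0 \<longleftrightarrow> x i j \<noteq> 0"
  using parent_cofactor_pos unfolding contracted_mult_def by auto

lemma edges_on_contracted: "edges_on V' contracted_mult = edges_on V' x"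
  by (rule edges_on_cong[OF contracted_mult_neq_0_iff])

lemma degree_on_contracted: "degree_on V' contracted_mult = degree_on V' x"
  by (rule degree_on_cong[OF contracted_mult_neq_0_iff])

lemma tree_contracted: "tree_on V' contracted_mult"
  by (rule tree_on_cong[OF tree_remove_leaf _ contracted_mult_neq_0_iff])
    (auto simp: contracted_mult_def sym)

lemma contracted_weights_pos: "k \<in> V' \<Longrightarrow> contracted_weights k > 0"
  using r_pos leaf_gcd_pos by (simp add: contracted_weights_def)

lemma gradient_flow_leaf_edge:
  "gradient_flow V x r y leaf_edge =
     int (x l p) * (r (snd leaf_edge) * y (fst leaf_edge) - r (fst leaf_edge) * y (snd leaf_edge))"
  using edges_on_remove_leaf mult_leaf_edge unfolding gradient_flow_def by simp

lemma restrict_gradient_flows_leaf_edge: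
  "restrict_vec {leaf_edge} ` gradient_flows V x r =
     {t \<in> supported_on {leaf_edge}. (int (x l p) * leaf_gcd) dvd t leaf_edge}"
proof (intro equalityI subsetI)
  have ends: "{fst leaf_edge, snd leaf_edge} = {l, p}" by (auto simp: leaf_edge_def min_def max_def)
  fix t assume "t \<in> restrict_vec {leaf_edge} ` gradient_flows V x r"
  then obtain y where t: "t = restrict_vec {leaf_edge} (gradient_flow V x r y)"
    by (auto simp: gradient_flows_def)
  have "leaf_gcd dvd r (fst leaf_edge)" "leaf_gcd dvd r (snd leaf_edge)"
    using ends by (auto simp: leaf_gcd_def doubleton_eq_iff)
  thus "t \<in> {t \<in> supported_on {leaf_edge}. (int (x l p) * leaf_gcd) dvd t leaf_edge}"
    using t gradient_flow_leaf_edge[of y] by (simp add: restrict_vec_def supported_on_def mult_dvd_mono)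
next
  fix t assume "t \<in> {t \<in> supported_on {leaf_edge}. (int (x l p) * leaf_gcd) dvd t leaf_edge}"
  then obtain q where t: "t \<in> supported_on {leaf_edge}" "t leaf_edge = int (x l p) * leaf_gcd * q"
    by (auto elim!: dvdE)
  define a b where "a = fst leaf_edge" and "b = snd leaf_edge"
  have ab: "a \<noteq> b" "gcd (r b) (r a) = leaf_gcd"
    using l_neq_p unfolding a_def b_def leaf_gcd_def leaf_edge_def by (auto simp: min_def max_def gcd.commute)
  obtain u v where uv: "u * r b + v * r a = leaf_gcd" using bezout_int[of "r b" "r a"] ab by auto
  define y where "y = (\<lambda>k. if k = a then u * q else if k = b then - (v * q) else 0)"
  have "gradient_flow V x r y leaf_edge = int (x l p) * ((u * r b + v * r a) * q)"
    unfolding gradient_flow_leaf_edge y_def a_def[symmetric] b_def[symmetric] using ab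
    by (simp add: algebra_simps)
  hence "restrict_vec {leaf_edge} (gradient_flow V x r y) = t"
    using t uv by (auto simp: restrict_vec_def supported_on_def fun_eq_iff)
  thus "t \<in> restrict_vec {leaf_edge} ` gradient_flows V x r" unfolding gradient_flows_def by blast
qed

lemma gradient_flow_contracted:
  assumes y_eq: "\<And>k. k \<noteq> l \<Longrightarrow> k \<noteq> p \<Longrightarrow> y k = y' k"
    and y_p: "y p = (r p div leaf_gcd) * y' p" and y_l: "r p * y l = r l * y p"
  shows "gradient_flow V x r y = gradient_flow V' contracted_mult contracted_weights y'"
proof
  fix e
  show "gradient_flow V x r y e = gradient_flow V' contracted_mult contracted_weights y' e"
  proof (cases "e \<in> edges_on V' x")
    case True
    then obtain i j where e: "e = (i, j)" "i < j" "i \<in> V'" "j \<in> V'" by (auto simp: edges_on_def)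
    have "e \<in> edges_on V x" using True edges_on_remove_leaf by auto
    hence "gradient_flow V x r y e = int (x i j) * (r j * y i - r i * y j)"
      using e unfolding gradient_flow_def by simp
    moreover have "gradient_flow V' contracted_mult contracted_weights y' e =
        int (contracted_mult i j) * (contracted_weights j * y' i - contracted_weights i * y' j)"
      using True e edges_on_contracted unfolding gradient_flow_def by simp
    moreover have "i \<noteq> l" "j \<noteq> l" "i \<noteq> p \<or> j \<noteq> p" using e by auto
    ultimately show ?thesis
      using y_eq[of i] y_eq[of j] y_p parent_cofactor parent_cofactor_pos
      by (cases "i = p"; cases "j = p")
        (auto simp: contracted_mult_def contracted_weights_def algebra_simps)
  next
    case False
    hence "gradient_flow V' contracted_mult contracted_weights y' e = 0"
      using edges_on_contracted unfolding gradient_flow_def by simp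
    moreover have "gradient_flow V x r y leaf_edge = 0"
      unfolding gradient_flow_leaf_edge using y_l l_neq_p
      by (auto simp: leaf_edge_def min_def max_def algebra_simps)
    ultimately show ?thesis
      using False edges_on_remove_leaf by (auto simp: gradient_flow_def)
  qed
qed

lemma gradient_flows_Int_remove_leaf:
  "gradient_flows V x r \<inter> supported_on (edges_on V' x) =
     gradient_flows V' contracted_mult contracted_weights"
proof (intro equalityI subsetI)
  define c cl where "c = r p div leaf_gcd" and "cl = r l div leaf_gcd"
  have c: "c * leaf_gcd = r p" and cl: "cl * leaf_gcd = r l"
    unfolding c_def cl_def leaf_gcd_def by simp_all
  fix t assume "t \<in> gradient_flows V x r \<inter> supported_on (edges_on V' x)"
  then obtain y where t: "t = gradient_flow V x r y" "t \<in> supported_on (edges_on V' x)"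
    by (auto simp: gradient_flows_def)
  have "t leaf_edge = 0" using t(2) leaf_edge_notin unfolding supported_on_def by blast
  hence y_l: "r p * y l = r l * y p"
    using gradient_flow_leaf_edge[of y] t(1) x_lp l_neq_p
    by (auto simp: leaf_edge_def min_def max_def algebra_simps split: if_splits)
  have "leaf_gcd * (c * y l) = r p * y l" using c by (simp add: algebra_simps)
  also have "\<dots> = r l * y p" by (rule y_l)
  also have "\<dots> = leaf_gcd * (cl * y p)" using cl by (simp add: algebra_simps)
  finally have "c * y l = cl * y p" using leaf_gcd_pos by simp
  hence "c dvd cl * y p" by (metis dvd_triv_left)
  moreover have "coprime c cl"
    unfolding c_def cl_def leaf_gcd_def using div_gcd_coprime[of "r p" "r l"] r_pos[OF p] by simp
  ultimately obtain z where "y p = c * z" by (auto simp: coprime_dvd_mult_right_iff elim: dvdE)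
  hence "t = gradient_flow V' contracted_mult contracted_weights (y(p := z))"
    unfolding t(1) c_def using y_l by (intro gradient_flow_contracted) auto
  thus "t \<in> gradient_flows V' contracted_mult contracted_weights" by (simp add: gradient_flows_def)
next
  fix t assume "t \<in> gradient_flows V' contracted_mult contracted_weights"
  then obtain y' where t: "t = gradient_flow V' contracted_mult contracted_weights y'"
    by (auto simp: gradient_flows_def)
  define y where "y = y'(p := (r p div leaf_gcd) * y' p, l := (r l div leaf_gcd) * y' p)"
  have "r l div leaf_gcd * leaf_gcd = r l" by (simp add: leaf_gcd_def)
  hence "r p * (r l div leaf_gcd) = r l * (r p div leaf_gcd)"
    using parent_cofactor by (metis mult.commute mult.left_commute)
  hence "gradient_flow V x r y = t"
    unfolding t using l_neq_p by (intro gradient_flow_contracted) (auto simp: y_def)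
  moreover have "t \<in> supported_on (edges_on V' x)"
    using t gradient_flows_supported[of V' contracted_mult contracted_weights] edges_on_contracted
    by (auto simp: gradient_flows_def)
  ultimately show "t \<in> gradient_flows V x r \<inter> supported_on (edges_on V' x)"
    unfolding gradient_flows_def by blast
qed

lemma prod_mult_remove_leaf:
  "(\<Prod>e\<in>edges_on V x. rat_of_nat (x (fst e) (snd e))) =
     rat_of_nat (x l p) * (\<Prod>e\<in>edges_on V' x. rat_of_nat (x (fst e) (snd e)))"
  unfolding edges_on_remove_leaf
  using finite_edges_on[of V' x] finite_V leaf_edge_notin mult_leaf_edge by simp

lemma prod_mult_contracted:
  "(\<Prod>e\<in>edges_on V' contracted_mult. rat_of_nat (contracted_mult (fst e) (snd e))) =
     (\<Prod>e\<in>edges_on V' x. rat_of_nat (x (fst e) (snd e))) * rat_of_int (r p div leaf_gcd) ^ degree_on V' x p"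
proof -
  have fin: "finite (edges_on V' x)" using finite_V by (simp add: finite_edges_on)
  have "(\<Prod>e\<in>edges_on V' contracted_mult. rat_of_nat (contracted_mult (fst e) (snd e))) =
      (\<Prod>e\<in>edges_on V' x. rat_of_nat (x (fst e) (snd e)) *
        (if fst e = p \<or> snd e = p then rat_of_int (r p div leaf_gcd) else 1))"
    unfolding edges_on_contracted using parent_cofactor_pos
    by (intro prod.cong) (auto simp: contracted_mult_def)
  also have "\<dots> = (\<Prod>e\<in>edges_on V' x. rat_of_nat (x (fst e) (snd e))) *
      rat_of_int (r p div leaf_gcd) ^ card {e \<in> edges_on V' x. fst e = p \<or> snd e = p}"
    by (simp add: prod.distrib prod_if_const_power[OF fin])
  finally show ?thesis
    using card_edges_incident[of V' x p] sym p l_neq_p by simp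
qed

lemma prod_degree_powers_remove_leaf:
  "(\<Prod>k\<in>V. rat_of_int (r k) powi (int (degree_on V x k) - 1)) =
     rat_of_int (r p) ^ degree_on V' x p *
     (\<Prod>k\<in>V' - {p}. rat_of_int (r k) powi (int (degree_on V' x k) - 1))"
proof -
  have "prod g V = g l * (g p * prod g (V' - {p}))" for g :: "nat \<Rightarrow> rat"
    using prod.remove[OF finite_V l, of g] prod.remove[of V' p g] finite_V p l_neq_p by simp
  moreover have "(\<Prod>k\<in>V' - {p}. rat_of_int (r k) powi (int (degree_on V x k) - 1)) =
      (\<Prod>k\<in>V' - {p}. rat_of_int (r k) powi (int (degree_on V' x k) - 1))"
    by (intro prod.cong) (auto simp: degree_on_other)
  ultimately show ?thesis by (simp add: degree_on_leaf degree_on_parent)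
qed

lemma prod_degree_powers_contracted:
  "(\<Prod>k\<in>V'. rat_of_int (contracted_weights k) powi (int (degree_on V' contracted_mult k) - 1)) =
     rat_of_int leaf_gcd powi (int (degree_on V' x p) - 1) *
     (\<Prod>k\<in>V' - {p}. rat_of_int (r k) powi (int (degree_on V' x k) - 1))"
proof -
  have "prod g V' = g p * prod g (V' - {p})" for g :: "nat \<Rightarrow> rat"
    using prod.remove[of V' p g] finite_V p l_neq_p by simp
  moreover have "(\<Prod>k\<in>V' - {p}. rat_of_int (contracted_weights k) powi (int (degree_on V' x k) - 1)) =
      (\<Prod>k\<in>V' - {p}. rat_of_int (r k) powi (int (degree_on V' x k) - 1))"
    by (intro prod.cong) (auto simp: contracted_weights_def)
  ultimately show ?thesis by (simp add: degree_on_contracted contracted_weights_def)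
qed

lemma Gcd_contracted_weights: "Gcd (contracted_weights ` V') = Gcd (r ` V)"
proof -
  have "contracted_weights ` V' = insert leaf_gcd (r ` (V' - {p}))"
    using p l_neq_p by (auto simp: contracted_weights_def)
  moreover have "r ` V = insert (r l) (insert (r p) (r ` (V' - {p})))" using l p by auto
  ultimately show ?thesis
    by (simp add: leaf_gcd_def gcd.assoc gcd.left_commute gcd.commute)
qed

lemma gradient_index_formula_remove_leaf:
  "gradient_index_formula V x r =
     rat_of_int (int (x l p) * leaf_gcd) * gradient_index_formula V' contracted_mult contracted_weights"
proof -
  define D where "D = degree_on V' x p"
  have "rat_of_int leaf_gcd * rat_of_int leaf_gcd powi (int D - 1) = rat_of_int leaf_gcd ^ D"
    using power_int_minus_mult[of "rat_of_int leaf_gcd" "int D"] leaf_gcd_pos by (simp add: mult.commute)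
  moreover have "rat_of_int (r p) ^ D = rat_of_int (r p div leaf_gcd) ^ D * rat_of_int leaf_gcd ^ D"
    using parent_cofactor by (metis of_int_mult power_mult_distrib)
  ultimately show ?thesis
    unfolding gradient_index_formula_def prod_mult_remove_leaf prod_mult_contracted
      prod_degree_powers_remove_leaf prod_degree_powers_contracted Gcd_contracted_weights D_def[symmetric]
    by (simp add: algebra_simps)
qed

lemma index_gradient_flows_remove_leaf:
  "subgroup_index (supported_on (edges_on V x)) (gradient_flows V x r) =
     nat (int (x l p) * leaf_gcd) *
     subgroup_index (supported_on (edges_on V' contracted_mult)) (gradient_flows V' contracted_mult contracted_weights)"
proof -
  have "edges_on V x = {leaf_edge} \<union> edges_on V' x" "{leaf_edge} \<inter> edges_on V' x = {}"
    using edges_on_remove_leaf leaf_edge_notin by auto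
  moreover have "int (x l p) * leaf_gcd \<noteq> 0" using x_lp leaf_gcd_pos by simp
  hence "subgroup_index (supported_on {leaf_edge})
      {t \<in> supported_on {leaf_edge}. int (x l p) * leaf_gcd dvd t leaf_edge} = nat (int (x l p) * leaf_gcd)"
    using subgroup_index_multiples_single[of "int (x l p) * leaf_gcd" leaf_edge] leaf_gcd_pos
    by (simp add: abs_mult)
  ultimately show ?thesis
    using subgroup_index_supported_on_Un[OF _ add_subgroup_gradient_flows, of "{leaf_edge}" "edges_on V' x" V x r]
      gradient_flows_supported[of V x r]
    by (simp add: restrict_gradient_flows_leaf_edge gradient_flows_Int_remove_leaf edges_on_contracted)
qed

end

lemma index_gradient_flows:
  assumes "tree_on V x" "\<And>k. k \<in> V \<Longrightarrow> r k > 0"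
  shows "rat_of_nat (subgroup_index (supported_on (edges_on V x)) (gradient_flows V x r)) =
    gradient_index_formula V x r"
  using assms
proof (induction V x arbitrary: r rule: tree_on_induct)
  case (singleton v x)
  have "edges_on {v} x = {}" "degree_on {v} x v = 0" by (auto simp: edges_on_def degree_on_def)
  thus ?case using singleton.prems[of v]
    by (simp add: gradient_index_formula_def subgroup_index_supported_on_empty
        add_subgroup_gradient_flows)
next
  case (remove_leaf V x l p)
  interpret weighted_tree_leaf V x l p r
    using remove_leaf by (simp add: weighted_tree_leaf_def weighted_tree_leaf_axioms_def)
  have "rat_of_nat (subgroup_index (supported_on (edges_on V' contracted_mult))
      (gradient_flows V' contracted_mult contracted_weights)) =
      gradient_index_formula V' contracted_mult contracted_weights"
    using remove_leaf.IH[OF tree_contracted] contracted_weights_pos by blast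
  moreover have "rat_of_nat (nat (int (x l p) * leaf_gcd)) = rat_of_int (int (x l p) * leaf_gcd)"
    using leaf_gcd_pos by simp
  ultimately show ?case
    by (simp add: index_gradient_flows_remove_leaf gradient_index_formula_remove_leaf)
qed

section \<open>The lattice of divisible flows\<close>

definition divisible_flows :: "nat set \<Rightarrow> (nat \<Rightarrow> nat \<Rightarrow> nat) \<Rightarrow> (nat \<Rightarrow> int) \<Rightarrow> (nat \<times> nat \<Rightarrow> int) set" where
  "divisible_flows V x r = {t \<in> supported_on (edges_on V x). \<forall>k\<in>V. r k dvd boundary (edges_on V x) t k}"

definition divisible_index_formula :: "nat set \<Rightarrow> (nat \<Rightarrow> int) \<Rightarrow> rat" where
  "divisible_index_formula V r = (\<Prod>k\<in>V. rat_of_int (r k)) / rat_of_int (Gcd (r ` V))"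

lemma add_subgroup_divisible_flows: "add_subgroup (divisible_flows V x r)"
  unfolding add_subgroup_def divisible_flows_def
proof (intro conjI ballI)
  show "0 \<in> {t \<in> supported_on (edges_on V x). \<forall>k\<in>V. r k dvd boundary (edges_on V x) t k}"
    by (simp add: boundary_zero_on add_subgroup_zero[OF add_subgroup_supported_on])
  fix a b
  assume "a \<in> {t \<in> supported_on (edges_on V x). \<forall>k\<in>V. r k dvd boundary (edges_on V x) t k}"
    and "b \<in> {t \<in> supported_on (edges_on V x). \<forall>k\<in>V. r k dvd boundary (edges_on V x) t k}"
  thus "a - b \<in> {t \<in> supported_on (edges_on V x). \<forall>k\<in>V. r k dvd boundary (edges_on V x) t k}"
    using add_subgroup_diff[OF add_subgroup_supported_on] by (auto simp: boundary_diff)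
qed

lemma divisible_flows_supported: "divisible_flows V x r \<subseteq> supported_on (edges_on V x)"
  by (auto simp: divisible_flows_def)

context weighted_tree_leaf
begin

lemma restrict_divisible_flows_subset:
  "restrict_vec (edges_on V' x) ` divisible_flows V x r \<subseteq> divisible_flows V' x contracted_weights"
proof
  fix t' assume "t' \<in> restrict_vec (edges_on V' x) ` divisible_flows V x r"
  then obtain t where t: "t' = restrict_vec (edges_on V' x) t" "t \<in> divisible_flows V x r" by blast
  have same: "boundary (edges_on V' x) t' k = boundary (edges_on V' x) t k" for k
    unfolding t(1) by (rule boundary_cong) (simp add: restrict_vec_def)
  have dvd: "r k dvd boundary (edges_on V x) t k" if "k \<in> V" for k
    using t(2) that by (simp add: divisible_flows_def)
  have "contracted_weights k dvd boundary (edges_on V' x) t' k" if k: "k \<in> V'" for k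
  proof (cases "k = p")
    case True
    have "r l dvd t leaf_edge" using dvd[OF l] by (simp add: boundary_leaf dvd_leaf_sign_mult)
    hence "leaf_gcd dvd t leaf_edge" unfolding leaf_gcd_def by (rule dvd_trans[rotated]) simp
    moreover have "leaf_gcd dvd boundary (edges_on V x) t p"
      using dvd[OF p] unfolding leaf_gcd_def by (rule dvd_trans[rotated]) simp
    ultimately have "leaf_gcd dvd boundary (edges_on V x) t p + leaf_sign * t leaf_edge" by simp
    thus ?thesis using True by (simp add: same boundary_parent contracted_weights_def)
  next
    case False
    thus ?thesis using dvd[of k] k same[of k] boundary_other[of k] by (simp add: contracted_weights_def)
  qed
  thus "t' \<in> divisible_flows V' x contracted_weights"
    unfolding t(1) by (simp add: divisible_flows_def)
qed

text \<open>A preimage of \<open>t'\<close> puts on the leaf edge a multiple of \<open>r\<^sub>l\<close> chosen by Bezout, so that the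
  boundary at \<open>p\<close>, a multiple of \<open>gcd r\<^sub>p r\<^sub>l\<close>, is corrected to a multiple of \<open>r\<^sub>p\<close>.\<close>
lemma divisible_flows_subset_restrict:
  "divisible_flows V' x contracted_weights \<subseteq> restrict_vec (edges_on V' x) ` divisible_flows V x r"
proof
  fix t' assume t': "t' \<in> divisible_flows V' x contracted_weights"
  hence t'_supp: "t' \<in> supported_on (edges_on V' x)"
    and dvd': "\<And>k. k \<in> V' \<Longrightarrow> contracted_weights k dvd boundary (edges_on V' x) t' k"
    by (auto simp: divisible_flows_def)
  have "leaf_gcd dvd boundary (edges_on V' x) t' p"
    using dvd'[of p] p l_neq_p by (simp add: contracted_weights_def)
  then obtain q where q: "boundary (edges_on V' x) t' p = leaf_gcd * q" by (auto elim: dvdE)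
  obtain u v where uv: "u * r l + v * r p = leaf_gcd"
    using bezout_int[of "r l" "r p"] unfolding leaf_gcd_def by (auto simp: gcd.commute)
  define t where "t = t'(leaf_edge := leaf_sign * (r l * u * q))"
  have "boundary (edges_on V x) t l = r l * (u * q)"
    using leaf_sign_square by (simp add: t_def boundary_fun_upd_leaf_edge mult.assoc[symmetric])
  moreover have "boundary (edges_on V x) t p = r p * (v * q)"
  proof -
    have "boundary (edges_on V x) t p = leaf_gcd * q - r l * u * q"
      using q l_neq_p leaf_sign_square by (simp add: t_def boundary_fun_upd_leaf_edge mult.assoc[symmetric])
    thus ?thesis unfolding uv[symmetric] by (simp add: algebra_simps)
  qed
  moreover have "r k dvd boundary (edges_on V x) t k" if "k \<in> V" "k \<noteq> l" "k \<noteq> p" for k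
    using dvd'[of k] that by (simp add: t_def boundary_fun_upd_leaf_edge contracted_weights_def)
  ultimately have "r k dvd boundary (edges_on V x) t k" if "k \<in> V" for k
    using that by (metis dvd_triv_left)
  moreover have "t \<in> supported_on (edges_on V x)"
    using t'_supp unfolding t_def by (rule fun_upd_leaf_edge_supported_on)
  moreover have "restrict_vec (edges_on V' x) t = t'"
  proof
    fix e show "restrict_vec (edges_on V' x) t e = t' e"
    proof (cases "e \<in> edges_on V' x")
      case True
      thus ?thesis using leaf_edge_notin by (auto simp: restrict_vec_def t_def)
    next
      case False
      hence "t' e = 0" using t'_supp unfolding supported_on_def by blast
      thus ?thesis using False by (simp add: restrict_vec_def)
    qed
  qed
  ultimately show "t' \<in> restrict_vec (edges_on V' x) ` divisible_flows V x r"
    unfolding divisible_flows_def by blast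
qed

lemma divisible_flows_Int_leaf_edge:
  "divisible_flows V x r \<inter> supported_on {leaf_edge} =
     {t \<in> supported_on {leaf_edge}. lcm (r l) (r p) dvd t leaf_edge}"
proof -
  have zero: "boundary (edges_on V' x) t k = 0" if "t \<in> supported_on {leaf_edge}" for t k
  proof (rule boundary_zero_on)
    fix e assume "e \<in> edges_on V' x"
    hence "e \<noteq> leaf_edge" using leaf_edge_notin by auto
    thus "t e = 0" using that unfolding supported_on_def by blast
  qed
  have "t \<in> supported_on (edges_on V x)" if "t \<in> supported_on {leaf_edge}" for t
    using that unfolding supported_on_def edges_on_remove_leaf by auto
  moreover have "(\<forall>k\<in>V. r k dvd boundary (edges_on V x) t k) \<longleftrightarrow> r l dvd t leaf_edge \<and> r p dvd t leaf_edge"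
    if t: "t \<in> supported_on {leaf_edge}" for t
  proof (intro iffI ballI conjI)
    assume all: "\<forall>k\<in>V. r k dvd boundary (edges_on V x) t k"
    show "r l dvd t leaf_edge" using all[rule_format, OF l] by (simp add: boundary_leaf dvd_leaf_sign_mult)
    show "r p dvd t leaf_edge" using all[rule_format, OF p] zero[OF t] by (simp add: boundary_parent dvd_leaf_sign_mult)
  next
    fix k assume "r l dvd t leaf_edge \<and> r p dvd t leaf_edge" "k \<in> V"
    thus "r k dvd boundary (edges_on V x) t k"
      using zero[OF t] by (cases "k = l"; cases "k = p")
        (auto simp: boundary_leaf boundary_parent boundary_other dvd_leaf_sign_mult)
  qed
  ultimately show ?thesis unfolding divisible_flows_def by auto
qed

lemma index_divisible_flows_remove_leaf:
  "subgroup_index (supported_on (edges_on V x)) (divisible_flows V x r) =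
     subgroup_index (supported_on (edges_on V' x)) (divisible_flows V' x contracted_weights) *
     nat (lcm (r l) (r p))"
proof -
  have E: "edges_on V x = edges_on V' x \<union> {leaf_edge}" and disj: "edges_on V' x \<inter> {leaf_edge} = {}"
    using edges_on_remove_leaf leaf_edge_notin by auto
  have "lcm (r l) (r p) \<noteq> 0" using r_pos[OF l] r_pos[OF p] by simp
  hence single: "subgroup_index (supported_on {leaf_edge})
      {t \<in> supported_on {leaf_edge}. lcm (r l) (r p) dvd t leaf_edge} = nat (lcm (r l) (r p))"
    using subgroup_index_multiples_single[of "lcm (r l) (r p)" leaf_edge] by simp
  have restrict: "restrict_vec (edges_on V' x) ` divisible_flows V x r = divisible_flows V' x contracted_weights"
    using restrict_divisible_flows_subset divisible_flows_subset_restrict by blast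
  have "subgroup_index (supported_on (edges_on V' x \<union> {leaf_edge})) (divisible_flows V x r) =
      subgroup_index (supported_on (edges_on V' x)) (restrict_vec (edges_on V' x) ` divisible_flows V x r) *
      subgroup_index (supported_on {leaf_edge}) (divisible_flows V x r \<inter> supported_on {leaf_edge})"
    using divisible_flows_supported[of V x r] unfolding E
    by (intro subgroup_index_supported_on_Un[OF disj add_subgroup_divisible_flows])
  thus ?thesis unfolding E[symmetric] restrict divisible_flows_Int_leaf_edge single .
qed

lemma divisible_index_formula_remove_leaf:
  "divisible_index_formula V r =
     divisible_index_formula V' contracted_weights * rat_of_int (lcm (r l) (r p))"
proof -
  define P0 where "P0 = (\<Prod>k\<in>V' - {p}. rat_of_int (r k))"
  define G where "G = rat_of_int (Gcd (r ` V))"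
  have "prod g V = g l * (g p * prod g (V' - {p}))" for g :: "nat \<Rightarrow> rat"
    using prod.remove[OF finite_V l, of g] prod.remove[of V' p g] finite_V p l_neq_p by simp
  hence V: "divisible_index_formula V r = rat_of_int (r l) * rat_of_int (r p) * P0 / G"
    unfolding divisible_index_formula_def P0_def G_def by simp
  have "prod g V' = g p * prod g (V' - {p})" for g :: "nat \<Rightarrow> rat"
    using prod.remove[of V' p g] finite_V p l_neq_p by simp
  moreover have "(\<Prod>k\<in>V' - {p}. rat_of_int (contracted_weights k)) = P0"
    unfolding P0_def by (intro prod.cong) (auto simp: contracted_weights_def)
  ultimately have V': "divisible_index_formula V' contracted_weights = rat_of_int leaf_gcd * P0 / G"
    unfolding divisible_index_formula_def Gcd_contracted_weights G_def
    by (simp add: contracted_weights_def)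
  have "leaf_gcd * lcm (r l) (r p) = r l * r p"
    using prod_gcd_lcm_int[of "r l" "r p"] r_pos[OF l] r_pos[OF p] by (simp add: leaf_gcd_def gcd.commute)
  hence "rat_of_int leaf_gcd * rat_of_int (lcm (r l) (r p)) = rat_of_int (r l) * rat_of_int (r p)"
    by (metis of_int_mult)
  thus ?thesis unfolding V V' by (simp add: algebra_simps)
qed

end

lemma index_divisible_flows:
  assumes "tree_on V x" "\<And>k. k \<in> V \<Longrightarrow> r k > 0"
  shows "rat_of_nat (subgroup_index (supported_on (edges_on V x)) (divisible_flows V x r)) =
    divisible_index_formula V r"
  using assms
proof (induction V x arbitrary: r rule: tree_on_induct)
  case (singleton v x)
  have "edges_on {v} x = {}" by (auto simp: edges_on_def)
  thus ?case using singleton.prems[of v]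
    by (simp add: divisible_index_formula_def subgroup_index_supported_on_empty add_subgroup_divisible_flows)
next
  case (remove_leaf V x l p)
  interpret weighted_tree_leaf V x l p r
    using remove_leaf by (simp add: weighted_tree_leaf_def weighted_tree_leaf_axioms_def)
  have "rat_of_nat (subgroup_index (supported_on (edges_on V' x)) (divisible_flows V' x contracted_weights)) =
      divisible_index_formula V' contracted_weights"
    using remove_leaf.IH[OF tree_remove_leaf] contracted_weights_pos by blast
  moreover have "rat_of_nat (nat (lcm (r l) (r p))) = rat_of_int (lcm (r l) (r p))" by simp
  ultimately show ?case
    by (simp add: index_divisible_flows_remove_leaf divisible_index_formula_remove_leaf)
qed

section \<open>The boundary map of a tree\<close>

lemma boundary_inj_on_tree:
  assumes "tree_on V x" "t \<in> supported_on (edges_on V x)" "\<And>k. k \<in> V \<Longrightarrow> boundary (edges_on V x) t k = 0"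
  shows "t = 0"
  using assms
proof (induction V x arbitrary: t rule: tree_on_induct)
  case (singleton v x)
  have "edges_on {v} x = {}" by (auto simp: edges_on_def)
  hence "t \<in> {0}" using singleton.prems(1) supported_on_empty by metis
  thus ?case by blast
next
  case (remove_leaf V x l p)
  interpret tree_leaf V x l p by fact
  have "leaf_sign * t leaf_edge = 0" using remove_leaf.prems(2)[OF l] boundary_leaf[of t] by simp
  hence t_leaf: "t leaf_edge = 0" using leaf_sign_square by (metis mult_zero_right mult.assoc mult_1)
  have "t e = 0" if "e \<notin> edges_on V' x" for e
  proof (cases "e = leaf_edge")
    case False
    thus ?thesis using that remove_leaf.prems(1) unfolding supported_on_def edges_on_remove_leaf by blast
  qed (use t_leaf in simp)
  hence "t \<in> supported_on (edges_on V' x)" unfolding supported_on_def by blast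
  moreover have "boundary (edges_on V' x) t k = 0" if "k \<in> V'" for k
    using remove_leaf.prems(2) that t_leaf p boundary_parent[of t] boundary_other[of k t]
    by (cases "k = p") auto
  ultimately show ?case using remove_leaf.IH[OF tree_remove_leaf] by blast
qed

text \<open>Inductively, the leaf edge carries the prescribed boundary value at the leaf, which is then
  moved onto the parent.\<close>
lemma boundary_surj_on_tree:
  assumes "tree_on V x" "(\<Sum>k\<in>V. z k) = 0"
  shows "\<exists>t \<in> supported_on (edges_on V x). \<forall>k\<in>V. boundary (edges_on V x) t k = z k"
  using assms
proof (induction V x arbitrary: z rule: tree_on_induct)
  case (singleton v x)
  thus ?case by (intro bexI[of _ 0]) (auto simp: boundary_def supported_on_def)
next
  case (remove_leaf V x l p)
  interpret tree_leaf V x l p by fact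
  define z' where "z' = z(p := z p + z l)"
  have "(\<Sum>k\<in>V. z k) = z l + (z p + (\<Sum>k\<in>V' - {p}. z k))"
    using sum.remove[OF finite_V l, of z] sum.remove[of V' p z] finite_V p l_neq_p by simp
  moreover have "(\<Sum>k\<in>V'. z' k) = z' p + (\<Sum>k\<in>V' - {p}. z' k)"
    using sum.remove[of V' p z'] finite_V p l_neq_p by simp
  moreover have "(\<Sum>k\<in>V' - {p}. z' k) = (\<Sum>k\<in>V' - {p}. z k)"
    by (rule sum.cong) (auto simp: z'_def)
  ultimately have "(\<Sum>k\<in>V'. z' k) = (\<Sum>k\<in>V. z k)" by (simp add: z'_def)
  then obtain t' where t': "t' \<in> supported_on (edges_on V' x)" "\<forall>k\<in>V'. boundary (edges_on V' x) t' k = z' k"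
    using remove_leaf.IH[OF tree_remove_leaf] remove_leaf.prems by auto
  define t where "t = t'(leaf_edge := leaf_sign * z l)"
  have "t \<in> supported_on (edges_on V x)"
    using t'(1) unfolding t_def by (rule fun_upd_leaf_edge_supported_on)
  moreover have "boundary (edges_on V x) t k = z k" if "k \<in> V" for k
    using t'(2) that l_neq_p leaf_sign_square
    by (simp add: t_def boundary_fun_upd_leaf_edge z'_def mult.assoc[symmetric])
  ultimately show ?case by blast
qed

lemma sum_edges_from:
  assumes "finite V" "E \<subseteq> V \<times> V"
  shows "(\<Sum>e\<in>E. if fst e = k then f e else 0) = (\<Sum>j\<in>V. if (k, j) \<in> E then f (k, j) else (0::int))"
proof -
  have "finite E" using assms finite_subset by blast
  hence "(\<Sum>e\<in>E. if fst e = k then f e else 0) = (\<Sum>e\<in>{e\<in>E. fst e = k}. f e)"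
    by (simp add: sum.inter_filter)
  also have "{e\<in>E. fst e = k} = Pair k ` {j\<in>V. (k, j) \<in> E}" using assms(2) by force
  also have "(\<Sum>e\<in>Pair k ` {j\<in>V. (k, j) \<in> E}. f e) = (\<Sum>j\<in>{j\<in>V. (k, j) \<in> E}. f (k, j))"
    by (subst sum.reindex) (auto simp: inj_on_def)
  also have "\<dots> = (\<Sum>j\<in>V. if (k, j) \<in> E then f (k, j) else 0)"
    using assms(1) by (simp add: sum.inter_filter)
  finally show ?thesis .
qed

lemma sum_edges_to:
  assumes "finite V" "E \<subseteq> V \<times> V"
  shows "(\<Sum>e\<in>E. if snd e = k then f e else 0) = (\<Sum>j\<in>V. if (j, k) \<in> E then f (j, k) else (0::int))"
proof -
  have "finite E" using assms finite_subset by blast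
  hence "(\<Sum>e\<in>E. if snd e = k then f e else 0) = (\<Sum>e\<in>{e\<in>E. snd e = k}. f e)"
    by (simp add: sum.inter_filter)
  also have "{e\<in>E. snd e = k} = (\<lambda>j. (j, k)) ` {j\<in>V. (j, k) \<in> E}" using assms(2) by force
  also have "(\<Sum>e\<in>(\<lambda>j. (j, k)) ` {j\<in>V. (j, k) \<in> E}. f e) = (\<Sum>j\<in>{j\<in>V. (j, k) \<in> E}. f (j, k))"
    by (subst sum.reindex) (auto simp: inj_on_def)
  also have "\<dots> = (\<Sum>j\<in>V. if (j, k) \<in> E then f (j, k) else 0)"
    using assms(1) by (simp add: sum.inter_filter)
  finally show ?thesis .
qed

lemma boundary_gradient_flow:
  assumes V: "finite V" and sym: "\<And>i j. i \<in> V \<Longrightarrow> j \<in> V \<Longrightarrow> x i j = x j i" and k: "k \<in> V"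
  shows "boundary (edges_on V x) (gradient_flow V x r y) k = (\<Sum>j\<in>V. int (x k j) * (r j * y k - r k * y j))"
proof -
  let ?E = "edges_on V x" and ?q = "gradient_flow V x r y"
  have E: "?E \<subseteq> V \<times> V" by (auto simp: edges_on_def)
  have "boundary ?E ?q k =
      (\<Sum>j\<in>V. (if (k, j) \<in> ?E then ?q (k, j) else 0) - (if (j, k) \<in> ?E then ?q (j, k) else 0))"
    unfolding boundary_def sum_subtractf sum_edges_from[OF V E] sum_edges_to[OF V E] ..
  also have "\<dots> = (\<Sum>j\<in>V. int (x k j) * (r j * y k - r k * y j))"
  proof (rule sum.cong[OF refl])
    fix j assume j: "j \<in> V"
    consider "k < j" | "j < k" | "j = k" by linarith
    thus "(if (k, j) \<in> ?E then ?q (k, j) else 0) - (if (j, k) \<in> ?E then ?q (j, k) else 0) =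
        int (x k j) * (r j * y k - r k * y j)"
    proof cases
      case 1
      thus ?thesis using j k by (auto simp: edges_on_def gradient_flow_def)
    next
      case 2
      thus ?thesis using j k sym[OF j k] by (auto simp: edges_on_def gradient_flow_def algebra_simps)
    qed (auto simp: edges_on_def)
  qed
  finally show ?thesis .
qed

section \<open>The critical group\<close>

lemma adj_on_skeleton: "skel_adj n x = adj_on {..<n} x"
  by (auto simp: fun_eq_iff skel_adj_def adj_on_def)

lemma tree_on_skeleton:
  assumes "loopless_multigraph n x" "skel_connected n x" "skel_is_tree n x"
  shows "tree_on {..<n} x"
  unfolding tree_on_def
proof (intro conjI)
  show "finite {..<n}" by simp
  have "0 < n" using assms(3) unfolding skel_is_tree_def by simp
  thus "{..<n} \<noteq> {}" by auto
  show "\<forall>i\<in>{..<n}. \<forall>j\<in>{..<n}. x i j = x j i"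
    using assms(1) unfolding loopless_multigraph_def by simp
  show "\<forall>i\<in>{..<n}. \<forall>j\<in>{..<n}. (adj_on {..<n} x)\<^sup>*\<^sup>* i j"
    using assms(2) unfolding skel_connected_def adj_on_skeleton by simp
  show "\<not> has_cycle_on {..<n} x"
    using assms(3) unfolding skel_is_tree_def skel_has_cycle_def has_cycle_on_def adj_on_skeleton
    by auto
qed

lemma skel_degree_eq_degree_on: "i < n \<Longrightarrow> skel_degree n x i = degree_on {..<n} x i"
proof -
  assume "i < n"
  hence "{j. skel_adj n x i j} = {j \<in> {..<n}. j \<noteq> i \<and> x i j \<noteq> 0}"
    unfolding skel_adj_def by auto
  thus ?thesis unfolding skel_degree_def degree_on_def by simp
qed

lemma skeleton_edges_eq_edges_on: "{(i, j). i < j \<and> j < n \<and> x i j \<noteq> 0} = edges_on {..<n} x"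
  by (auto simp: edges_on_def)

lemma sum_lap_mult:
  "(\<Sum>j<n. lap x d k j * y j) = (if k < n then d k * y k else 0) - (\<Sum>j<n. int (x k j) * y j)"
proof -
  have "(\<Sum>j<n. lap x d k j * y j) = (\<Sum>j<n. (if k = j then d k * y j else 0) - int (x k j) * y j)"
    unfolding lap_def by (rule sum.cong) (auto simp: algebra_simps)
  thus ?thesis by (simp add: sum_subtractf sum.delta)
qed

definition lap_vec :: "nat \<Rightarrow> (nat \<Rightarrow> nat \<Rightarrow> nat) \<Rightarrow> (nat \<Rightarrow> int) \<Rightarrow> (nat \<Rightarrow> int) \<Rightarrow> nat \<Rightarrow> int" where
  "lap_vec n x d y = (\<lambda>i. if i < n then (\<Sum>j<n. lap x d i j * y j) else 0)"

lemma image_lattice_eq: "image_lattice n x d = lap_vec n x d ` zvecs n"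
  unfolding image_lattice_def lap_vec_def by auto

lemma lap_vec_diff: "lap_vec n x d y - lap_vec n x d y' = lap_vec n x d (y - y')"
  unfolding lap_vec_def by (simp add: fun_eq_iff sum_subtractf algebra_simps)

lemma add_subgroup_image_lattice: "add_subgroup (image_lattice n x d)"
  unfolding add_subgroup_def image_lattice_eq
proof (intro conjI ballI)
  have "lap_vec n x d 0 = 0" "0 \<in> zvecs n" by (auto simp: lap_vec_def zvecs_def)
  thus "0 \<in> lap_vec n x d ` zvecs n" by (metis image_eqI)
  fix a b assume "a \<in> lap_vec n x d ` zvecs n" "b \<in> lap_vec n x d ` zvecs n"
  then obtain y y' where "a = lap_vec n x d y" "b = lap_vec n x d y'" "y \<in> zvecs n" "y' \<in> zvecs n"
    by blast
  moreover have "y - y' \<in> zvecs n" using calculation by (simp add: zvecs_def)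
  ultimately show "a - b \<in> lap_vec n x d ` zvecs n" by (simp add: lap_vec_diff)
qed

text \<open>Contains the image lattice because \<open>diag(d) - A\<close> is symmetric and annihilates \<open>r\<close>.\<close>
definition weight_kernel :: "nat \<Rightarrow> (nat \<Rightarrow> int) \<Rightarrow> (nat \<Rightarrow> int) set" where
  "weight_kernel n r = {v \<in> zvecs n. (\<Sum>i<n. r i * v i) = 0}"

lemma add_subgroup_weight_kernel: "add_subgroup (weight_kernel n r)"
  unfolding add_subgroup_def weight_kernel_def zvecs_def by (simp add: sum_subtractf algebra_simps)

lemma add_subgroup_int_multiple:
  fixes v :: "'a \<Rightarrow> int"
  assumes "add_subgroup K" "v \<in> K"
  shows "(\<lambda>i. int j * v i) \<in> K"
proof (induction j)
  case 0 thus ?case using add_subgroup_zero[OF assms(1)] by (simp add: zero_fun_def)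
next
  case (Suc j)
  have "(\<lambda>i. int (Suc j) * v i) = (\<lambda>i. int j * v i) + v" by (simp add: fun_eq_iff algebra_simps)
  thus ?case using add_subgroup_add[OF assms(1) Suc assms(2)] by simp
qed

text \<open>Pigeonhole: two of the multiples \<open>0, v, \<dots>, N v\<close> lie in the same class.\<close>
lemma finite_quotient_torsion:
  fixes v :: "'a \<Rightarrow> int"
  assumes K: "add_subgroup K" and M: "add_subgroup M" and fin: "finite (K // coset_rel K M)"
    and v: "v \<in> K"
  shows "\<exists>k>0. (\<lambda>i. k * v i) \<in> M"
proof -
  let ?R = "coset_rel K M"
  define f where "f j = ?R `` {(\<lambda>i. int j * v i)}" for j
  have sub: "f ` {0..card (K // ?R)} \<subseteq> K // ?R"
    unfolding f_def using add_subgroup_int_multiple[OF K v] by (auto intro: quotientI)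
  have "\<not> inj_on f {0..card (K // ?R)}"
  proof
    assume "inj_on f {0..card (K // ?R)}"
    from card_inj_on_le[OF this sub fin] show False by simp
  qed
  then obtain a b where "a \<noteq> b" "f a = f b" unfolding inj_on_def by blast
  then obtain a b where ab: "b < a" "f a = f b" by (metis linorder_neqE_nat)
  hence "((\<lambda>i. int a * v i), (\<lambda>i. int b * v i)) \<in> ?R"
    using eq_equiv_class_iff[OF equiv_coset_rel[OF M] add_subgroup_int_multiple[OF K v, of a]
        add_subgroup_int_multiple[OF K v, of b]]
    unfolding f_def by blast
  moreover have "(\<lambda>i. int a * v i) - (\<lambda>i. int b * v i) = (\<lambda>i. (int a - int b) * v i)"
    by (simp add: fun_eq_iff algebra_simps)
  ultimately show ?thesis using ab(1) unfolding coset_rel_def by (intro exI[of _ "int a - int b"]) auto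
qed

lemma gradient_index_formula_div_divisible_index_formula:
  assumes "finite V" "\<And>k. k \<in> V \<Longrightarrow> r k > 0"
  shows "gradient_index_formula V x r / divisible_index_formula V r =
    (\<Prod>e\<in>edges_on V x. rat_of_nat (x (fst e) (snd e))) *
    (\<Prod>k\<in>V. rat_of_int (r k) powi (int (degree_on V x k) - 2)) * rat_of_int (Gcd (r ` V)) ^ 2"
proof -
  have "rat_of_int (r k) powi (int (degree_on V x k) - 1) =
      rat_of_int (r k) powi (int (degree_on V x k) - 2) * rat_of_int (r k)" if "k \<in> V" for k
    using power_int_minus_mult[of "rat_of_int (r k)" "int (degree_on V x k) - 1"] assms(2)[OF that]
    by simp
  hence "(\<Prod>k\<in>V. rat_of_int (r k) powi (int (degree_on V x k) - 1)) =
      (\<Prod>k\<in>V. rat_of_int (r k) powi (int (degree_on V x k) - 2)) * (\<Prod>k\<in>V. rat_of_int (r k))"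
    by (simp add: prod.distrib[symmetric])
  moreover have "(\<Prod>k\<in>V. rat_of_int (r k)) \<noteq> 0" using assms by (simp add: less_imp_neq[symmetric])
  ultimately show ?thesis
    unfolding gradient_index_formula_def divisible_index_formula_def by (simp add: power2_eq_square)
qed

locale tree_arith_structure =
  fixes n :: nat and x :: "nat \<Rightarrow> nat \<Rightarrow> nat" and r d :: "nat \<Rightarrow> int"
  assumes tree: "tree_on {..<n} x" and arith: "arith_structure n x r d"
begin

abbreviation "E \<equiv> edges_on {..<n} x"
abbreviation "P \<equiv> divisible_flows {..<n} x r"
abbreviation "Q \<equiv> gradient_flows {..<n} x r"
abbreviation "K \<equiv> weight_kernel n r"
abbreviation "L \<equiv> image_lattice n x d"

text \<open>On divisible flows the division is exact.\<close>
definition potential :: "(nat \<times> nat \<Rightarrow> int) \<Rightarrow> nat \<Rightarrow> int" where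
  "potential t = (\<lambda>k. if k < n then boundary E t k div r k else 0)"

lemma r_pos: "k < n \<Longrightarrow> r k > 0"
  using arith unfolding arith_structure_def by auto

lemma Gcd_r: "Gcd (r ` {..<n}) = 1"
  using arith unfolding arith_structure_def by auto

lemma sym: "i < n \<Longrightarrow> j < n \<Longrightarrow> x i j = x j i"
  using tree unfolding tree_on_def by auto

lemma boundary_gradient_flow_eq:
  assumes k: "k < n"
  shows "boundary E (gradient_flow {..<n} x r y) k = r k * lap_vec n x d y k"
proof -
  have "(\<Sum>j<n. int (x k j) * r j) = d k * r k"
    using arith k sum_lap_mult[where n=n and x=x and d=d and k=k and y=r] unfolding arith_structure_def by simp
  moreover have "boundary E (gradient_flow {..<n} x r y) k = (\<Sum>j<n. int (x k j) * (r j * y k - r k * y j))"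
    using boundary_gradient_flow[of "{..<n}" x k r y] k sym by simp
  moreover have "(\<Sum>j<n. int (x k j) * (r j * y k - r k * y j)) =
      y k * (\<Sum>j<n. int (x k j) * r j) - r k * (\<Sum>j<n. int (x k j) * y j)"
    by (simp add: sum_distrib_left sum_subtractf algebra_simps)
  ultimately show ?thesis
    using sum_lap_mult[where n=n and x=x and d=d and k=k and y=y] k by (simp add: lap_vec_def right_diff_distrib)
qed

lemma gradient_flows_subset_divisible_flows: "Q \<subseteq> P"
proof
  fix t assume "t \<in> Q"
  then obtain y where t: "t = gradient_flow {..<n} x r y" unfolding gradient_flows_def by blast
  have "t \<in> supported_on E" using t gradient_flows_supported unfolding gradient_flows_def by blast
  moreover have "r k dvd boundary E t k" if "k \<in> {..<n}" for k
    using t boundary_gradient_flow_eq that by simp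
  ultimately show "t \<in> P" by (simp add: divisible_flows_def)
qed

lemma r_mult_potential: "t \<in> P \<Longrightarrow> k < n \<Longrightarrow> r k * potential t k = boundary E t k"
  by (simp add: potential_def divisible_flows_def)

lemma potential_gradient_flow: "potential (gradient_flow {..<n} x r y) = lap_vec n x d y"
proof
  fix k show "potential (gradient_flow {..<n} x r y) k = lap_vec n x d y k"
    using boundary_gradient_flow_eq[of k y] r_pos[of k] by (auto simp: potential_def lap_vec_def)
qed

lemma potential_diff:
  assumes "t \<in> P" "t' \<in> P"
  shows "potential (t - t') = potential t - potential t'"
proof
  fix k
  have "k < n \<Longrightarrow> r k dvd boundary E t k \<and> r k dvd boundary E t' k"
    using assms by (simp add: divisible_flows_def)
  thus "potential (t - t') k = (potential t - potential t') k"
    by (simp add: potential_def boundary_diff div_diff)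
qed

lemma potential_in_weight_kernel:
  assumes t: "t \<in> P"
  shows "potential t \<in> K"
proof -
  have "(\<Sum>i<n. r i * potential t i) = (\<Sum>i<n. boundary E t i)"
    using r_mult_potential[OF t] by simp
  also have "\<dots> = 0" by (rule sum_boundary[OF _ _ finite_edges_on]) (auto simp: edges_on_def)
  finally show ?thesis by (simp add: weight_kernel_def zvecs_def potential_def)
qed

lemma image_lattice_subset_weight_kernel: "L \<subseteq> K"
proof
  fix v assume "v \<in> L"
  then obtain y where "v = potential (gradient_flow {..<n} x r y)"
    unfolding image_lattice_eq potential_gradient_flow by blast
  moreover have "gradient_flow {..<n} x r y \<in> P"
    using gradient_flows_subset_divisible_flows unfolding gradient_flows_def by blast
  ultimately show "v \<in> K" using potential_in_weight_kernel by simp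
qed

lemma potential_surj:
  assumes v: "v \<in> K"
  obtains t where "t \<in> P" "potential t = v"
proof -
  have "(\<Sum>k<n. r k * v k) = 0" using v unfolding weight_kernel_def by simp
  then obtain t where t: "t \<in> supported_on E" "\<forall>k<n. boundary E t k = r k * v k"
    using boundary_surj_on_tree[OF tree, of "\<lambda>k. r k * v k"] by auto
  hence "t \<in> P" by (simp add: divisible_flows_def)
  moreover have "potential t = v"
  proof
    fix k show "potential t k = v k"
      using t(2) r_pos[of k] v unfolding potential_def weight_kernel_def zvecs_def by auto
  qed
  ultimately show thesis using that by blast
qed

text \<open>Injectivity of the boundary map on a tree turns equality of boundaries into equality of flows.\<close>
lemma diff_in_gradient_flows_iff:
  assumes t: "t \<in> P" "t' \<in> P"
  shows "t - t' \<in> Q \<longleftrightarrow> potential t - potential t' \<in> L"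
proof
  assume "t - t' \<in> Q"
  then obtain y where y: "t - t' = gradient_flow {..<n} x r y" unfolding gradient_flows_def by blast
  define y0 where "y0 = (\<lambda>j. if j < n then y j else 0)"
  have "gradient_flow {..<n} x r y = gradient_flow {..<n} x r y0"
    by (rule gradient_flow_cong) (simp add: y0_def)
  hence "potential t - potential t' = lap_vec n x d y0"
    using potential_diff[OF t] y potential_gradient_flow by simp
  moreover have "y0 \<in> zvecs n" by (simp add: y0_def zvecs_def)
  ultimately show "potential t - potential t' \<in> L" unfolding image_lattice_eq by blast
next
  assume "potential t - potential t' \<in> L"
  then obtain y where y: "potential t - potential t' = lap_vec n x d y"
    unfolding image_lattice_eq by blast
  define w where "w = (t - t') - gradient_flow {..<n} x r y"
  have tt': "t - t' \<in> P" using add_subgroup_diff[OF add_subgroup_divisible_flows t] .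
  have "t - t' \<in> supported_on E" using tt' divisible_flows_supported by blast
  moreover have "gradient_flow {..<n} x r y \<in> supported_on E"
    using gradient_flows_supported unfolding gradient_flows_def by blast
  ultimately have "w \<in> supported_on E"
    unfolding w_def by (rule add_subgroup_diff[OF add_subgroup_supported_on])
  moreover have "boundary E w k = 0" if k: "k \<in> {..<n}" for k
  proof -
    have "boundary E (t - t') k = r k * potential (t - t') k"
      using r_mult_potential[OF tt'] k by simp
    also have "\<dots> = r k * lap_vec n x d y k" using potential_diff[OF t] y by simp
    also have "\<dots> = boundary E (gradient_flow {..<n} x r y) k"
      using boundary_gradient_flow_eq k by simp
    finally show ?thesis unfolding w_def boundary_diff by simp
  qed
  ultimately have "w = 0" by (rule boundary_inj_on_tree[OF tree])
  hence "t - t' = gradient_flow {..<n} x r y" unfolding w_def by simp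
  thus "t - t' \<in> Q" unfolding gradient_flows_def by simp
qed

lemma card_quotient_flows: "card (P // coset_rel P Q) = card (K // coset_rel K L)"
proof (rule card_quotient_eq[where f = potential])
  show "equiv P (coset_rel P Q)" "equiv K (coset_rel K L)"
    by (simp_all add: equiv_coset_rel add_subgroup_gradient_flows add_subgroup_image_lattice)
  show "potential t \<in> K" if "t \<in> P" for t using potential_in_weight_kernel[OF that] .
  show "\<exists>t\<in>P. (potential t, v) \<in> coset_rel K L" if v: "v \<in> K" for v
  proof -
    obtain t where "t \<in> P" "potential t = v" using potential_surj[OF v] .
    thus ?thesis using v add_subgroup_zero[OF add_subgroup_image_lattice] by (auto simp: coset_rel_def)
  qed
  show "(t, t') \<in> coset_rel P Q \<longleftrightarrow> (potential t, potential t') \<in> coset_rel K L"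
    if "t \<in> P" "t' \<in> P" for t t'
    using that by (simp add: coset_rel_def diff_in_gradient_flows_iff potential_in_weight_kernel)
qed

lemma divisible_index_formula_neq_0: "divisible_index_formula {..<n} r \<noteq> 0"
  using r_pos Gcd_r by (simp add: divisible_index_formula_def less_imp_neq[symmetric])

lemma card_quotient_flows_eq_formula:
  "rat_of_nat (card (P // coset_rel P Q)) =
     gradient_index_formula {..<n} x r / divisible_index_formula {..<n} r"
proof -
  have "subgroup_index (supported_on E) Q = subgroup_index (supported_on E) P * card (P // coset_rel P Q)"
    using subgroup_index_tower[OF add_subgroup_gradient_flows add_subgroup_divisible_flows
        add_subgroup_supported_on gradient_flows_subset_divisible_flows divisible_flows_supported]
    unfolding subgroup_index_def .
  hence "gradient_index_formula {..<n} x r =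
      divisible_index_formula {..<n} r * rat_of_nat (card (P // coset_rel P Q))"
    using index_gradient_flows[OF tree] index_divisible_flows[OF tree] r_pos by (metis lessThan_iff of_nat_mult)
  thus ?thesis using divisible_index_formula_neq_0 by simp
qed

lemma finite_quotient_weight_kernel: "finite (K // coset_rel K L)"
proof -
  have "(\<Prod>e\<in>E. rat_of_nat (x (fst e) (snd e))) \<noteq> 0"
    by (simp add: finite_edges_on) (auto simp: edges_on_def)
  moreover have "(\<Prod>k<n. rat_of_int (r k) powi (int (degree_on {..<n} x k) - 1)) \<noteq> 0"
    using r_pos by (simp add: less_imp_neq[symmetric])
  ultimately have "gradient_index_formula {..<n} x r \<noteq> 0"
    unfolding gradient_index_formula_def Gcd_r by simp
  hence "rat_of_nat (card (K // coset_rel K L)) \<noteq> 0"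
    using card_quotient_flows_eq_formula card_quotient_flows divisible_index_formula_neq_0 by simp
  thus ?thesis using card.infinite by force
qed

lemma torsion_eq_weight_kernel: "{v \<in> zvecs n. \<exists>k::int. k > 0 \<and> (\<lambda>i. k * v i) \<in> L} = K"
proof (intro equalityI subsetI)
  fix v assume "v \<in> {v \<in> zvecs n. \<exists>k::int. k > 0 \<and> (\<lambda>i. k * v i) \<in> L}"
  then obtain k :: int where k: "k > 0" "(\<lambda>i. k * v i) \<in> K" "v \<in> zvecs n"
    using image_lattice_subset_weight_kernel by blast
  hence "k * (\<Sum>i<n. r i * v i) = 0"
    unfolding weight_kernel_def by (simp add: sum_distrib_left algebra_simps)
  thus "v \<in> K" using k unfolding weight_kernel_def by simp
next
  fix v assume "v \<in> K"
  thus "v \<in> {v \<in> zvecs n. \<exists>k::int. k > 0 \<and> (\<lambda>i. k * v i) \<in> L}"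
    using finite_quotient_torsion[OF add_subgroup_weight_kernel add_subgroup_image_lattice
        finite_quotient_weight_kernel] unfolding weight_kernel_def by blast
qed

lemma critical_group_eq_quotient: "critical_group n x d = K // coset_rel K L"
proof -
  define R where "R = {(u, v). u \<in> zvecs n \<and> v \<in> zvecs n \<and> (\<lambda>i. u i - v i) \<in> L}"
  have "R `` {v} = coset_rel K L `` {v}" if v: "v \<in> K" for v
  proof (intro equalityI subsetI)
    fix u assume "u \<in> R `` {v}"
    hence u: "u \<in> zvecs n" "v - u \<in> L" unfolding R_def by (auto simp: fun_diff_def)
    have "v - (v - u) \<in> K"
      using add_subgroup_diff[OF add_subgroup_weight_kernel v] u(2) image_lattice_subset_weight_kernel by blast
    thus "u \<in> coset_rel K L `` {v}" using v u unfolding coset_rel_def by simp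
  next
    fix u assume "u \<in> coset_rel K L `` {v}"
    thus "u \<in> R `` {v}" unfolding coset_rel_def weight_kernel_def R_def by (auto simp: fun_diff_def)
  qed
  hence "K // R = K // coset_rel K L" unfolding quotient_def by auto
  thus ?thesis unfolding critical_group_def torsion_eq_weight_kernel R_def .
qed

end

theorem mainTheorem13:
  fixes n :: nat and x :: "nat \<Rightarrow> nat \<Rightarrow> nat" and r d :: "nat \<Rightarrow> int"
  assumes "loopless_multigraph n x"
    and "skel_connected n x"
    and "skel_is_tree n x"
    and "arith_structure n x r d"
  shows "rat_of_nat (card (critical_group n x d)) =
     (\<Prod>(i, j) \<in> {(i, j). i < j \<and> j < n \<and> x i j \<noteq> 0}. rat_of_nat (x i j)) *
     (\<Prod>i<n. (rat_of_int (r i)) powi (int (skel_degree n x i) - 2))"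
proof -
  interpret tree_arith_structure n x r d
    using assms by (simp add: tree_arith_structure_def tree_on_skeleton)
  have "rat_of_nat (card (critical_group n x d)) =
      gradient_index_formula {..<n} x r / divisible_index_formula {..<n} r"
    using critical_group_eq_quotient card_quotient_flows card_quotient_flows_eq_formula by simp
  also have "\<dots> = (\<Prod>e\<in>edges_on {..<n} x. rat_of_nat (x (fst e) (snd e))) *
      (\<Prod>i<n. rat_of_int (r i) powi (int (degree_on {..<n} x i) - 2))"
    using gradient_index_formula_div_divisible_index_formula[of "{..<n}" r x] r_pos Gcd_r by simp
  also have "\<dots> = (\<Prod>(i, j) \<in> {(i, j). i < j \<and> j < n \<and> x i j \<noteq> 0}. rat_of_nat (x i j)) *
      (\<Prod>i<n. (rat_of_int (r i)) powi (int (skel_degree n x i) - 2))"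
    unfolding skeleton_edges_eq_edges_on by (simp add: skel_degree_eq_degree_on case_prod_beta)
  finally show ?thesis .
qed

end
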